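(* Assume (A1), $v_n\to\infty$, and $\gamma_k<\gamma_C$. Then there exists $\delta>0$ such that $\sum_{i=1}^nE|W_{i,n}|^{2+\delta}\to0$ as $n\to\infty$, where $W_{i,n}=\frac{\sqrt{v_n}}{n}\big((U_{i,n}-\gamma_{n,k})-\gamma_k(V_{i,n}-1)\big)$.
   Context: Let $K\ge 1$, fix $k\in\{1,\dots,K\}$. Let $(X_i,\mathcal C_i)_{i\ge1}$ be i.i.d., $X_i\ge 0$ with continuous distribution function $F$, $\mathcal C_i\in\{1,\dots,K\}$; let $(C_i)_{i\ge1}$ be i.i.d. nonnegative with continuous distribution function $G$, independent of $(X_i,\mathcal C_i)_{i\ge1}$. Set $Z_i=\min(X_i,C_i)$, $\delta_i=\mathbb I_{X_i\le C_i}$, $\xi_i=\delta_i\mathcal C_i$. Let $F^{(k)}(t)=P(X_1\le t,\mathcal C_1=k)$, $\bar F^{(j)}(t)=P(X_1>t,\mathcal C_1=j)$, $\bar F=\sum_j\bar F^{(j)}$, $\bar G=1-G$, $\bar H=\bar F\bar G$. Let $t_n\to\infty$ be deterministic, $v_n=n\bar F^{(k)}(t_n)\bar G(t_n)$. Define $\phi_n(u)=\frac{\log(u/t_n)}{\bar F^{(k)}(t_n)}\mathbb I_{u>t_n}$, $g_n(u)=\frac{\mathbb I_{u>t_n}}{\bar F^{(k)}(t_n)}$, $\gamma_{n,k}=\int\phi_n\,dF^{(k)}$, $\psi(f,z)=\int_z^\infty f\,dF^{(k)}$, $C(z)=\int_0^z\frac{dG(t)}{\bar H(t)\bar G(t)}$,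 $U_{i,n}=\frac{\phi_n(Z_i)}{\bar G(Z_i)}\mathbb I_{\xi_i=k}+\frac{1-\delta_i}{\bar H(Z_i)}\psi(\phi_n,Z_i)-\int_0^{Z_i}\psi(\phi_n,u)\,dC(u)$, and $V_{i,n}$ the same with $g_n$ in place of $\phi_n$. Regular variation with index $\alpha$: $f(tx)/f(t)\to x^\alpha$ for all $x>0$. (A1): for every $j$, $\bar F^{(j)}$ is regularly varying with index $-1/\gamma_j$ ($\gamma_j>0$), and $\bar G$ regularly varying with index $-1/\gamma_C$ ($\gamma_C>0$). *)

theory Defs
  imports "HOL-Probability.Probability"
begin

definition regvar :: "(real \<Rightarrow> real) \<Rightarrow> real \<Rightarrow> bool" where
  "regvar f \<alpha> \<longleftrightarrow> (\<forall>x>0. ((\<lambda>t. f (t * x) / f t) \<longlongrightarrow> x powr \<alpha>) at_top)"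

text \<open>All quantities below are built from the reference observation (X1, Cau1, C1)
 on the probability space M; Cau1 is the cause indicator.\<close>

definition subF :: "'a measure \<Rightarrow> ('a \<Rightarrow> real) \<Rightarrow> ('a \<Rightarrow> nat) \<Rightarrow> nat \<Rightarrow> real \<Rightarrow> real" where
  "subF M X1 Cau1 k t = measure M {w \<in> space M. X1 w \<le> t \<and> Cau1 w = k}"

definition subFbar :: "'a measure \<Rightarrow> ('a \<Rightarrow> real) \<Rightarrow> ('a \<Rightarrow> nat) \<Rightarrow> nat \<Rightarrow> real \<Rightarrow> real" where
  "subFbar M X1 Cau1 j t = measure M {w \<in> space M. X1 w > t \<and> Cau1 w = j}"

definition Fbar :: "'a measure \<Rightarrow> ('a \<Rightarrow> real) \<Rightarrow> ('a \<Rightarrow> nat) \<Rightarrow> nat \<Rightarrow> real \<Rightarrow> real" where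
  "Fbar M X1 Cau1 K t = (\<Sum>j\<in>{1..K}. subFbar M X1 Cau1 j t)"

definition distF :: "'a measure \<Rightarrow> ('a \<Rightarrow> real) \<Rightarrow> real \<Rightarrow> real" where
  "distF M Y t = measure M {w \<in> space M. Y w \<le> t}"

definition Gbar :: "'a measure \<Rightarrow> ('a \<Rightarrow> real) \<Rightarrow> real \<Rightarrow> real" where
  "Gbar M C1 t = 1 - distF M C1 t"

definition Hbar :: "'a measure \<Rightarrow> ('a \<Rightarrow> real) \<Rightarrow> ('a \<Rightarrow> nat) \<Rightarrow> ('a \<Rightarrow> real) \<Rightarrow> nat \<Rightarrow> real \<Rightarrow> real" where
  "Hbar M X1 Cau1 C1 K t = Fbar M X1 Cau1 K t * Gbar M C1 t"

definition intFk :: "'a measure \<Rightarrow> ('a \<Rightarrow> real) \<Rightarrow> ('a \<Rightarrow> nat) \<Rightarrow> nat \<Rightarrow> (real \<Rightarrow> real) \<Rightarrow> real" where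
  "intFk M X1 Cau1 k f = (\<integral>w. (if Cau1 w = k then f (X1 w) else 0) \<partial>M)"

definition psi :: "'a measure \<Rightarrow> ('a \<Rightarrow> real) \<Rightarrow> ('a \<Rightarrow> nat) \<Rightarrow> nat \<Rightarrow> (real \<Rightarrow> real) \<Rightarrow> real \<Rightarrow> real" where
  "psi M X1 Cau1 k f z = (\<integral>w. (if Cau1 w = k \<and> X1 w > z then f (X1 w) else 0) \<partial>M)"

text \<open>integral over [0,z] of h dC, where dC(t) = dG(t) / (bar H(t) bar G(t));
  since C1 is nonnegative the constraint t \<ge> 0 is automatic.\<close>
definition intdC :: "'a measure \<Rightarrow> ('a \<Rightarrow> real) \<Rightarrow> ('a \<Rightarrow> nat) \<Rightarrow> ('a \<Rightarrow> real) \<Rightarrow> nat \<Rightarrow> (real \<Rightarrow> real) \<Rightarrow> real \<Rightarrow> real" where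
  "intdC M X1 Cau1 C1 K h z =
     (\<integral>w. (if C1 w \<le> z then h (C1 w) / (Hbar M X1 Cau1 C1 K (C1 w) * Gbar M C1 (C1 w)) else 0) \<partial>M)"

definition phin :: "'a measure \<Rightarrow> ('a \<Rightarrow> real) \<Rightarrow> ('a \<Rightarrow> nat) \<Rightarrow> nat \<Rightarrow> real \<Rightarrow> real \<Rightarrow> real" where
  "phin M X1 Cau1 k tn u = (if u > tn then ln (u / tn) / subFbar M X1 Cau1 k tn else 0)"

definition gn :: "'a measure \<Rightarrow> ('a \<Rightarrow> real) \<Rightarrow> ('a \<Rightarrow> nat) \<Rightarrow> nat \<Rightarrow> real \<Rightarrow> real \<Rightarrow> real" where
  "gn M X1 Cau1 k tn u = (if u > tn then 1 / subFbar M X1 Cau1 k tn else 0)"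

text \<open>The summand U (or V) evaluated at an observation with lifetime x, censoring c
  and cause cau: Z = min x c, delta = [x \<le> c], xi = delta * cau.\<close>
definition Ufun :: "'a measure \<Rightarrow> ('a \<Rightarrow> real) \<Rightarrow> ('a \<Rightarrow> nat) \<Rightarrow> ('a \<Rightarrow> real) \<Rightarrow> nat \<Rightarrow> nat
     \<Rightarrow> (real \<Rightarrow> real) \<Rightarrow> real \<Rightarrow> real \<Rightarrow> nat \<Rightarrow> real" where
  "Ufun M X1 Cau1 C1 K k f x c cau =
     (let Z = min x c; \<delta> = (if x \<le> c then 1 else 0 :: real);
          \<xi> = (if x \<le> c then cau else 0)
      in (if \<xi> = k then f Z / Gbar M C1 Z else 0)
         + (1 - \<delta>) / Hbar M X1 Cau1 C1 K Z * psi M X1 Cau1 k f Z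
         - intdC M X1 Cau1 C1 K (psi M X1 Cau1 k f) Z)"

end

theory Submission
  imports Defs
begin

text \<open>
  Under (A1) every tail involved satisfies a doubling inequality at large arguments, e.g.
  Fbar^(k)(2s) <= 2^(-alpha) Fbar^(k)(s) for any alpha < 1/gamma_k, and iterating along dyadic
  scales gives Potter bounds. On u > t_n both phi_n and g_n are dominated by the envelope
  (u/t_n)^theta / (theta Fbar^(k)(t_n)). Splitting each moment integral into dyadic shells and
  summing the geometric series shows that each of the three terms of U_{i,n} and V_{i,n} has
  p-th moment O((Fbar^(k)(t_n) Gbar(t_n))^(1-p)) with p = 2 + theta, provided theta is small
  enough for all these series to converge, which is possible exactly because gamma_k < gamma_C.
  Summing over i <= n gives O(v_n^(1 - p/2)), which tends to 0.
\<close>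

section \<open>Dyadic decomposition of tail integrals\<close>

lemma dyadic_bracket:
  fixes y :: real assumes "y \<ge> 1"
  shows "\<exists>m::nat. 2 ^ m \<le> y \<and> y < 2 ^ (m+1)"
proof -
  define m where "m = nat \<lfloor>log 2 y\<rfloor>"
  have l0: "log 2 y \<ge> 0" using assms by simp
  have "real m = of_int \<lfloor>log 2 y\<rfloor>" using l0 by (simp add: m_def)
  then have a: "real m \<le> log 2 y" "log 2 y < real m + 1" by linarith+
  have "2 ^ m = 2 powr real m" by (simp add: powr_realpow)
  also have "\<dots> \<le> 2 powr (log 2 y)" using a by simp
  also have "\<dots> = y" using assms by simp
  finally have 1: "2 ^ m \<le> y" .
  have "y = 2 powr (log 2 y)" using assms by simp
  also have "\<dots> < 2 powr (real m + 1)" using a by simp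
  also have "\<dots> = 2 ^ (m+1)" by (simp add: powr_realpow[symmetric] powr_add)
  finally show ?thesis using 1 by blast
qed

lemma doubling_bound_iterate:
  fixes Sf :: "real \<Rightarrow> real"
  assumes rate: "\<forall>s\<ge>T. Sf (2 * s) \<le> r * Sf s" and r: "r \<ge> 0" and T: "T > 0" and s: "s \<ge> T"
  shows "Sf (2^m * s) \<le> r^m * Sf s"
proof (induction m)
  case 0 then show ?case by simp
next
  case (Suc m)
  have "2^m * s \<ge> T" using s T by (smt (verit) mult_le_cancel_right1 one_le_power)
  then have "Sf (2 * (2^m * s)) \<le> r * Sf (2^m * s)" using rate by blast
  also have "\<dots> \<le> r * (r^m * Sf s)" using Suc r by (simp add: mult_left_mono)
  finally show ?case by (simp add: mult.assoc)
qed

lemma nn_integral_tail_powr_le: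
  fixes \<mu> :: "'b measure" and Y :: "'b \<Rightarrow> real" and Sf :: "real \<Rightarrow> real"
  assumes Ym: "Y \<in> borel_measurable \<mu>" and Pm: "{x\<in>space \<mu>. P x} \<in> sets \<mu>"
    and Sb: "\<forall>s\<ge>T. emeasure \<mu> {x\<in>space \<mu>. P x \<and> Y x \<ge> s} \<le> ennreal (Sf s)"
    and Snn: "\<forall>s\<ge>T. Sf s \<ge> 0"
    and rate: "\<forall>s\<ge>T. Sf (2 * s) \<le> r * Sf s" and r: "r \<ge> 0" and l: "l \<ge> 0"
    and rl: "2 powr l * r < 1" and T: "T > 0" and s: "s \<ge> T"
  shows "(\<integral>\<^sup>+ x. ennreal (if P x \<and> Y x \<ge> s then (Y x / s) powr l else 0) \<partial>\<mu>)
     \<le> ennreal (2 powr l / (1 - 2 powr l * r) * Sf s)"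
proof -
  define g where "g m x = ennreal (2 powr ((real m + 1) * l)) * indicator {x\<in>space \<mu>. P x \<and> Y x \<ge> 2^m * s} x" for m x
  have gm: "g m \<in> borel_measurable \<mu>" for m
  proof -
    have "{x\<in>space \<mu>. P x \<and> Y x \<ge> 2^m * s} = {x\<in>space \<mu>. P x} \<inter> {x\<in>space \<mu>. Y x \<ge> 2^m * s}" by auto
    also have "\<dots> \<in> sets \<mu>" using Pm Ym by measurable
    finally show ?thesis unfolding g_def by measurable
  qed
  have pw: "ennreal (if P x \<and> Y x \<ge> s then (Y x / s) powr l else 0) \<le> (\<Sum>m. g m x)" if x: "x \<in> space \<mu>" for x
  proof (cases "P x \<and> Y x \<ge> s")
    case True
    then have y1: "Y x / s \<ge> 1" using s T by simp
    obtain m :: nat where m: "2^m \<le> Y x / s" "Y x / s < 2^(m+1)" using dyadic_bracket[OF y1] by blast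
    have "(Y x / s) powr l \<le> (2^(m+1)) powr l" using m y1 l by (intro powr_mono2) auto
    also have "\<dots> = 2 powr ((real m + 1) * l)"
    proof -
      have "(2::real)^(m+1) = 2 powr (real (m+1))" by (rule powr_realpow[symmetric]) simp
      then show ?thesis by (simp add: powr_powr add.commute)
    qed
    finally have 1: "(Y x / s) powr l \<le> 2 powr ((real m + 1) * l)" .
    have "2^m * s \<le> Y x" using m s T by (simp add: field_simps)
    then have "g m x = ennreal (2 powr ((real m + 1) * l))" using True x by (simp add: g_def)
    then have "ennreal (if P x \<and> Y x \<ge> s then (Y x / s) powr l else 0) \<le> g m x"
      using True 1 by (simp add: ennreal_leI)
    also have "\<dots> \<le> (\<Sum>m. g m x)"
      using sum_le_suminf[OF summableI, of "{m}" "\<lambda>m. g m x"] by simp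
    finally show ?thesis .
  qed auto
  have "(\<integral>\<^sup>+ x. ennreal (if P x \<and> Y x \<ge> s then (Y x / s) powr l else 0) \<partial>\<mu>) \<le> (\<integral>\<^sup>+ x. (\<Sum>m. g m x) \<partial>\<mu>)"
    by (intro nn_integral_mono) (use pw in auto)
  also have "\<dots> = (\<Sum>m. integral\<^sup>N \<mu> (g m))" by (rule nn_integral_suminf) (rule gm)
  also have "\<dots> \<le> (\<Sum>m. ennreal (2 powr l * Sf s * (2 powr l * r)^m))"
  proof (intro suminf_le allI)
    fix m
    have sm: "2^m * s \<ge> T" using s T by (smt (verit) mult_le_cancel_right1 one_le_power)
    have "integral\<^sup>N \<mu> (g m) = ennreal (2 powr ((real m + 1) * l)) * emeasure \<mu> {x\<in>space \<mu>. P x \<and> Y x \<ge> 2^m * s}"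
      unfolding g_def
    proof (rule nn_integral_cmult_indicator)
      have "{x\<in>space \<mu>. P x \<and> Y x \<ge> 2^m * s} = {x\<in>space \<mu>. P x} \<inter> {x\<in>space \<mu>. Y x \<ge> 2^m * s}" by auto
      also have "\<dots> \<in> sets \<mu>" using Pm Ym by measurable
      finally show "{x\<in>space \<mu>. P x \<and> Y x \<ge> 2^m * s} \<in> sets \<mu>" .
    qed
    also have "\<dots> \<le> ennreal (2 powr ((real m + 1) * l)) * ennreal (Sf (2^m * s))"
      using Sb sm by (intro mult_left_mono) auto
    also have "\<dots> \<le> ennreal (2 powr ((real m + 1) * l)) * ennreal (r^m * Sf s)"
      using doubling_bound_iterate[OF rate r T s, of m] by (intro mult_left_mono ennreal_leI) auto
    also have "\<dots> = ennreal (2 powr l * Sf s * (2 powr l * r)^m)"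
    proof -
      have "2 powr ((real m + 1) * l) = 2 powr l * (2 powr l)^m"
      proof -
        have "2 powr ((real m + 1) * l) = 2 powr l * 2 powr (l * real m)"
          by (simp add: algebra_simps powr_add)
        also have "2 powr (l * real m) = (2 powr l)^m" by (simp add: powr_powr[symmetric] powr_realpow)
        finally show ?thesis .
      qed
      then show ?thesis using r Snn s
        by (simp add: ennreal_mult'[symmetric] power_mult_distrib mult_ac)
    qed
    finally show "integral\<^sup>N \<mu> (g m) \<le> ennreal (2 powr l * Sf s * (2 powr l * r)^m)" .
  qed (simp_all add: summableI)
  also have "\<dots> = ennreal (2 powr l * Sf s * (1 / (1 - 2 powr l * r)))"
  proof (rule suminf_ennreal_eq)
    show "0 \<le> 2 powr l * Sf s * (2 powr l * r) ^ i" for i using r Snn s by simp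
    have "(\<lambda>m. (2 powr l * r)^m) sums (1 / (1 - 2 powr l * r))"
      using geometric_sums[of "2 powr l * r"] rl r by simp
    then show "(\<lambda>i. 2 powr l * Sf s * (2 powr l * r) ^ i) sums (2 powr l * Sf s * (1 / (1 - 2 powr l * r)))"
      by (rule sums_mult)
  qed
  also have "\<dots> = ennreal (2 powr l / (1 - 2 powr l * r) * Sf s)" by simp
  finally show ?thesis .
qed

lemma nn_integral_level_powr_le:
  fixes \<mu> :: "'b measure" and V :: "'b \<Rightarrow> real"
  assumes Vm: "V \<in> borel_measurable \<mu>"
    and Vb: "\<forall>u>0. emeasure \<mu> {x\<in>space \<mu>. V x < u} \<le> ennreal u"
    and q: "q > 1" and s: "s > 0"
  shows "(\<integral>\<^sup>+ x. ennreal (if V x \<ge> s then V x powr (-q) else 0) \<partial>\<mu>)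
     \<le> ennreal (2 / (1 - 2 powr (1-q)) * s powr (1-q))"
proof -
  define g where "g m x = ennreal ((2^m * s) powr (-q)) * indicator {x\<in>space \<mu>. V x < 2^(m+1) * s} x" for m x
  have gm: "g m \<in> borel_measurable \<mu>" for m unfolding g_def using Vm by measurable
  have pw: "ennreal (if V x \<ge> s then V x powr (-q) else 0) \<le> (\<Sum>m. g m x)" if x: "x \<in> space \<mu>" for x
  proof (cases "V x \<ge> s")
    case True
    then have y1: "V x / s \<ge> 1" using s by simp
    obtain m :: nat where m: "2^m \<le> V x / s" "V x / s < 2^(m+1)" using dyadic_bracket[OF y1] by blast
    have a: "2^m * s \<le> V x" "V x < 2^(m+1) * s" using m s by (simp_all add: field_simps)
    have "V x powr (-q) \<le> (2^m * s) powr (-q)" using a s q by (intro powr_mono2') auto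
    then have "ennreal (if V x \<ge> s then V x powr (-q) else 0) \<le> g m x"
      using True a x by (simp add: g_def ennreal_leI)
    also have "\<dots> \<le> (\<Sum>m. g m x)"
      using sum_le_suminf[OF summableI, of "{m}" "\<lambda>m. g m x"] by simp
    finally show ?thesis .
  qed auto
  have "(\<integral>\<^sup>+ x. ennreal (if V x \<ge> s then V x powr (-q) else 0) \<partial>\<mu>) \<le> (\<integral>\<^sup>+ x. (\<Sum>m. g m x) \<partial>\<mu>)"
    by (intro nn_integral_mono) (use pw in auto)
  also have "\<dots> = (\<Sum>m. integral\<^sup>N \<mu> (g m))" by (rule nn_integral_suminf) (rule gm)
  also have "\<dots> \<le> (\<Sum>m. ennreal (2 * s powr (1-q) * (2 powr (1-q))^m))"
  proof (intro suminf_le allI)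
    fix m
    have "integral\<^sup>N \<mu> (g m) = ennreal ((2^m * s) powr (-q)) * emeasure \<mu> {x\<in>space \<mu>. V x < 2^(m+1) * s}"
      unfolding g_def by (rule nn_integral_cmult_indicator) (use Vm in measurable)
    also have "\<dots> \<le> ennreal ((2^m * s) powr (-q)) * ennreal (2^(m+1) * s)"
      using Vb s by (intro mult_left_mono) auto
    also have "\<dots> = ennreal (2 * s powr (1-q) * (2 powr (1-q))^m)"
    proof -
      have e1: "(2::real)^m = 2 powr (real m)" by (simp add: powr_realpow)
      have "(2^m * s) powr (-q) * (2^(m+1) * s) = 2 * ((2 powr (real m) * s) powr (-q) * (2 powr (real m) * s))"
        using e1 by simp
      also have "\<dots> = 2 * (2 powr (real m) * s) powr (1-q)"
      proof -
        have yp: "2 powr (real m) * s > 0" using s by simp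
        then show ?thesis by (simp add: powr_diff powr_minus_divide)
      qed
      also have "\<dots> = 2 * s powr (1-q) * (2 powr (1-q))^m"
        using s by (simp add: powr_mult powr_powr powr_realpow[symmetric] mult.commute)
      finally show ?thesis using s by (simp add: ennreal_mult'[symmetric])
    qed
    finally show "integral\<^sup>N \<mu> (g m) \<le> ennreal (2 * s powr (1-q) * (2 powr (1-q))^m)" .
  qed (simp_all add: summableI)
  also have "\<dots> = ennreal (2 * s powr (1-q) * (1 / (1 - 2 powr (1-q))))"
  proof (rule suminf_ennreal_eq)
    show "0 \<le> 2 * s powr (1-q) * (2 powr (1-q)) ^ i" for i by simp
    have lt: "2 powr (1-q) < 1" using q by (simp add: powr_less_one)
    have "(\<lambda>m. (2 powr (1-q))^m) sums (1 / (1 - 2 powr (1-q)))"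
      using geometric_sums[of "2 powr (1-q)"] lt by simp
    then show "(\<lambda>i. 2 * s powr (1-q) * (2 powr (1-q)) ^ i) sums (2 * s powr (1-q) * (1 / (1 - 2 powr (1-q))))"
      by (rule sums_mult)
  qed
  also have "\<dots> = ennreal (2 / (1 - 2 powr (1-q)) * s powr (1-q))" by simp
  finally show ?thesis .
qed

lemma survival_transform_subuniform:
  fixes \<mu> :: "'b measure" and Y :: "'b \<Rightarrow> real" and Sv :: "real \<Rightarrow> real"
  assumes P: "prob_space \<mu>" and Ym: "Y \<in> borel_measurable \<mu>"
    and Sv: "\<And>y. Sv y = measure \<mu> {x\<in>space \<mu>. Y x > y}"
    and cont: "continuous_on UNIV Sv" and y0: "Sv y0 = 1"
  shows "\<forall>u>0. emeasure \<mu> {x\<in>space \<mu>. Sv (Y x) < u} \<le> ennreal u"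
proof (intro allI impI)
  interpret prob_space \<mu> by (rule P)
  fix u :: real assume u: "u > 0"
  have ev: "{x\<in>space \<mu>. Y x > y} \<in> sets \<mu>" "{x\<in>space \<mu>. Y x \<ge> y} \<in> sets \<mu>" for y
    using Ym by measurable
  have mono: "Sv y \<le> Sv y'" if "y' \<le> y" for y y'
    unfolding Sv using that ev by (intro finite_measure_mono) auto
  show "emeasure \<mu> {x\<in>space \<mu>. Sv (Y x) < u} \<le> ennreal u"
  proof (cases "u \<ge> 1")
    case True
    have "emeasure \<mu> {x\<in>space \<mu>. Sv (Y x) < u} \<le> emeasure \<mu> (space \<mu>)"
      by (intro emeasure_space)
    also have "\<dots> = 1" by (simp add: emeasure_space_1)
    also have "\<dots> \<le> ennreal u" using True by simp
    finally show ?thesis .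
  next
    case False
    define A where "A = {y. Sv y \<le> u}"
    show ?thesis
    proof (cases "A = {}")
      case True
      then have e: "{x\<in>space \<mu>. Sv (Y x) < u} = {}" unfolding A_def by (auto simp: set_eq_iff) (metis less_imp_le)
      show ?thesis by (subst e) simp
    next
      case Ane: False
      have cl: "closed A" unfolding A_def
        by (rule closed_Collect_le[OF cont continuous_on_const])
      have bdd: "bdd_below A"
      proof (rule bdd_belowI[of _ y0])
        fix y assume "y \<in> A"
        then have "Sv y \<le> u" by (simp add: A_def)
        show "y0 \<le> y"
        proof (rule ccontr)
          assume "\<not> y0 \<le> y"
          then have "Sv y0 \<le> Sv y" using mono by simp
          then show False using \<open>Sv y \<le> u\<close> False y0 by simp
        qed
      qed
      define ys where "ys = Inf A"
      have ysA: "ys \<in> A" unfolding ys_def by (rule closed_contains_Inf[OF Ane bdd cl])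
      have sub: "{x\<in>space \<mu>. Sv (Y x) < u} \<subseteq> {x\<in>space \<mu>. Y x \<ge> ys}"
      proof safe
        fix x assume "x \<in> space \<mu>" "Sv (Y x) < u"
        then have "Y x \<in> A" by (simp add: A_def)
        then show "ys \<le> Y x" unfolding ys_def using bdd by (rule cInf_lower)
      qed
      have isc: "isCont Sv ys" using cont by (simp add: continuous_on_eq_continuous_at)
      have lim: "(Sv \<longlongrightarrow> Sv ys) (at_left ys)"
        using isc unfolding isCont_def by (rule tendsto_mono[OF at_le, rotated]) simp
      have "measure \<mu> {x\<in>space \<mu>. Y x \<ge> ys} \<le> Sv ys"
      proof (rule tendsto_lowerbound[OF lim])
        have "ys - 1 < ys" by simp
        from eventually_at_left_real[OF this]
        show "\<forall>\<^sub>F y in at_left ys. measure \<mu> {x\<in>space \<mu>. Y x \<ge> ys} \<le> Sv y"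
        proof (rule eventually_mono)
          fix y assume "y \<in> {ys - 1<..<ys}"
          then show "measure \<mu> {x\<in>space \<mu>. Y x \<ge> ys} \<le> Sv y"
            unfolding Sv using ev by (intro finite_measure_mono) auto
        qed
      qed simp
      also have "\<dots> \<le> u" using ysA by (simp add: A_def)
      finally have "measure \<mu> {x\<in>space \<mu>. Y x \<ge> ys} \<le> u" .
      then have "emeasure \<mu> {x\<in>space \<mu>. Y x \<ge> ys} \<le> ennreal u"
        by (simp add: emeasure_eq_measure ennreal_leI)
      moreover have "emeasure \<mu> {x\<in>space \<mu>. Sv (Y x) < u} \<le> emeasure \<mu> {x\<in>space \<mu>. Y x \<ge> ys}"
        using sub ev by (intro emeasure_mono) auto
      ultimately show ?thesis by (rule order_trans[rotated])
    qed
  qed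
qed

section \<open>Regularly varying tails\<close>

lemma regvar_eventually_doubling_le:
  assumes rv: "regvar f \<alpha>" and nn: "\<And>s. f s \<ge> 0" and r: "\<alpha> < \<rho>"
  shows "eventually (\<lambda>s. f s > 0 \<and> f (2 * s) \<le> 2 powr \<rho> * f s) at_top"
proof -
  have lim: "((\<lambda>t. f (t * 2) / f t) \<longlongrightarrow> 2 powr \<alpha>) at_top"
    using rv unfolding regvar_def by simp
  have e1: "eventually (\<lambda>t. f (t * 2) / f t < 2 powr \<rho>) at_top"
    using order_tendstoD(2)[OF lim] r by simp
  have e2: "eventually (\<lambda>t. f (t * 2) / f t > 0) at_top"
    using order_tendstoD(1)[OF lim] by simp
  show ?thesis using e1 e2
  proof (rule eventually_elim2)
    fix t assume a: "f (t * 2) / f t < 2 powr \<rho>" "f (t * 2) / f t > 0"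
    then have ft: "f t > 0" using nn[of t] by (cases "f t = 0") auto
    then show "f t > 0 \<and> f (2 * t) \<le> 2 powr \<rho> * f t"
      using a by (simp add: divide_less_eq mult.commute)
  qed
qed

lemma regvar_eventually_doubling_ge:
  assumes rv: "regvar f \<alpha>" and nn: "\<And>s. f s \<ge> 0" and r: "\<rho> < \<alpha>"
  shows "eventually (\<lambda>s. f s > 0 \<and> 2 powr \<rho> * f s \<le> f (2 * s)) at_top"
proof -
  have lim: "((\<lambda>t. f (t * 2) / f t) \<longlongrightarrow> 2 powr \<alpha>) at_top"
    using rv unfolding regvar_def by simp
  have e1: "eventually (\<lambda>t. f (t * 2) / f t > 2 powr \<rho>) at_top"
    using order_tendstoD(1)[OF lim] r by simp
  show ?thesis using e1
  proof (rule eventually_mono)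
    fix t assume a: "f (t * 2) / f t > 2 powr \<rho>"
    then have ft: "f t > 0" using nn[of t] by (cases "f t = 0") auto
    then show "f t > 0 \<and> 2 powr \<rho> * f t \<le> f (2 * t)"
      using a by (simp add: less_divide_eq mult.commute)
  qed
qed

lemma Fbar_eventually_doubling:
  assumes "\<forall>j\<in>{1..K}. regvar (subFbar M X1 Cau1 j) (\<rho>' j) \<and> \<rho>' j < \<rho>"
  shows "eventually (\<lambda>s. Fbar M X1 Cau1 K (2 * s) \<le> 2 powr \<rho> * Fbar M X1 Cau1 K s) at_top"
proof -
  have "eventually (\<lambda>s. \<forall>j\<in>{1..K}. subFbar M X1 Cau1 j (2 * s) \<le> 2 powr \<rho> * subFbar M X1 Cau1 j s) at_top"
  proof (rule eventually_ball_finite)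
    show "\<forall>j\<in>{1..K}. eventually (\<lambda>s. subFbar M X1 Cau1 j (2 * s) \<le> 2 powr \<rho> * subFbar M X1 Cau1 j s) at_top"
    proof
      fix j assume "j \<in> {1..K}"
      with assms have rv: "regvar (subFbar M X1 Cau1 j) (\<rho>' j)" and lt: "\<rho>' j < \<rho>" by auto
      have "\<And>s. subFbar M X1 Cau1 j s \<ge> 0" by (simp add: subFbar_def)
      from regvar_eventually_doubling_le[OF rv this lt]
      show "eventually (\<lambda>s. subFbar M X1 Cau1 j (2 * s) \<le> 2 powr \<rho> * subFbar M X1 Cau1 j s) at_top"
        by (rule eventually_mono) simp
    qed
  qed simp
  then show ?thesis
    unfolding Fbar_def by (rule eventually_mono) (auto simp: sum_distrib_left intro: sum_mono)
qed

lemma potter_bound_decreasing: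
  fixes f :: "real \<Rightarrow> real"
  assumes mono: "\<And>x y. T \<le> x \<Longrightarrow> x \<le> y \<Longrightarrow> f y \<le> f x"
    and rate: "\<forall>s\<ge>T. f (2 * s) \<le> 2 powr (-\<alpha>) * f s" and a: "\<alpha> \<ge> 0" and T: "T > 0"
    and nn: "\<And>s. f s \<ge> 0" and t: "t \<ge> T" and x: "x \<ge> t"
  shows "f x \<le> 2 powr \<alpha> * (x / t) powr (-\<alpha>) * f t"
proof -
  have y1: "x / t \<ge> 1" using x t T by simp
  obtain m :: nat where m: "2^m \<le> x / t" "x / t < 2^(m+1)" using dyadic_bracket[OF y1] by blast
  have mt: "2^m * t \<le> x" using m t T by (simp add: field_simps)
  have "T \<le> 2^m * t" using t T by (smt (verit) mult_le_cancel_right1 one_le_power)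
  then have "f x \<le> f (2^m * t)" using mono mt by blast
  also have "\<dots> \<le> (2 powr (-\<alpha>))^m * f t" using doubling_bound_iterate[OF rate _ T t] by simp
  also have "(2 powr (-\<alpha>))^m = 2 powr (-\<alpha> * real m)" by (simp add: powr_power mult.commute)
  also have "2 powr (-\<alpha> * real m) \<le> 2 powr \<alpha> * (x / t) powr (-\<alpha>)"
  proof -
    have "(2::real) powr (- \<alpha> * (real m + 1)) = (2 powr (real m + 1)) powr (-\<alpha>)"
      by (simp add: powr_powr mult.commute)
    also have "(2::real) powr (real m + 1) = 2^(m+1)" by (simp add: powr_realpow[symmetric] powr_add)
    finally have e: "(2::real) powr (- \<alpha> * (real m + 1)) = (2^(m+1)) powr (-\<alpha>)" .
    have "(2^(m+1)) powr (-\<alpha>) \<le> (x / t) powr (-\<alpha>)"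
      using m y1 a by (intro powr_mono2') auto
    then have "2 powr (- \<alpha> * (real m + 1)) \<le> (x / t) powr (-\<alpha>)" using e by simp
    then have "2 powr \<alpha> * 2 powr (- \<alpha> * (real m + 1)) \<le> 2 powr \<alpha> * (x / t) powr (-\<alpha>)"
      by (simp add: mult_left_mono)
    moreover have "2 powr \<alpha> * 2 powr (- \<alpha> * (real m + 1)) = 2 powr (-\<alpha> * real m)"
      by (simp add: powr_add[symmetric] algebra_simps)
    ultimately show ?thesis by linarith
  qed
  finally show ?thesis using nn[of t] by (simp add: mult_right_mono)
qed

lemma potter_bound_increasing:
  fixes g :: "real \<Rightarrow> real"
  assumes mono: "\<And>x y. T \<le> x \<Longrightarrow> x \<le> y \<Longrightarrow> g x \<le> g y"
    and rate: "\<forall>s\<ge>T. g (2 * s) \<le> 2 powr \<beta> * g s" and b: "\<beta> \<ge> 0" and T: "T > 0"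
    and nn: "\<And>s. g s \<ge> 0" and t: "t \<ge> T" and x: "x \<ge> t"
  shows "g x \<le> 2 powr \<beta> * (x / t) powr \<beta> * g t"
proof -
  have y1: "x / t \<ge> 1" using x t T by simp
  obtain m :: nat where m: "2^m \<le> x / t" "x / t < 2^(m+1)" using dyadic_bracket[OF y1] by blast
  have mt: "x \<le> 2^(m+1) * t" using m t T by (simp add: field_simps)
  have "T \<le> x" using x t by linarith
  then have "g x \<le> g (2^(m+1) * t)" using mono mt by blast
  also have "\<dots> \<le> (2 powr \<beta>)^(m+1) * g t" by (rule doubling_bound_iterate[OF rate _ T t]) simp
  also have "(2 powr \<beta>)^(m+1) = 2 powr \<beta> * 2 powr (\<beta> * real m)"
  proof -
    have "(2 powr \<beta>)^(m+1) = 2 powr \<beta> * (2 powr \<beta>)^m" by (rule power_Suc[unfolded Suc_eq_plus1])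
    also have "(2 powr \<beta>)^m = 2 powr (\<beta> * real m)" by (simp add: powr_power mult.commute)
    finally show ?thesis .
  qed
  also have "2 powr (\<beta> * real m) \<le> (x / t) powr \<beta>"
  proof -
    have "(2::real) powr (\<beta> * real m) = (2 powr (real m)) powr \<beta>"
      by (simp add: powr_powr mult.commute)
    also have "(2::real) powr (real m) = 2^m" by (simp add: powr_realpow)
    also have "(2^m) powr \<beta> \<le> (x / t) powr \<beta>" using m b by (intro powr_mono2) auto
    finally show ?thesis .
  qed
  finally have "g x \<le> 2 powr \<beta> * (x / t) powr \<beta> * g t"
    using nn[of t] by (simp add: mult_right_mono mult.assoc)
  then show ?thesis .
qed

lemma continuous_distF_imp_no_atom:
  fixes M :: "'a measure" and Y :: "'a \<Rightarrow> real"
  assumes P: "prob_space M" and Ym: "Y \<in> borel_measurable M" and cont: "continuous_on UNIV (distF M Y)"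
  shows "measure M {w\<in>space M. Y w = s} = 0"
proof -
  interpret prob_space M by (rule P)
  have ev: "{w\<in>space M. Y w \<le> y} \<in> sets M" "{w\<in>space M. Y w = y} \<in> sets M" for y
    using Ym by measurable
  have isc: "isCont (distF M Y) s" using cont by (simp add: continuous_on_eq_continuous_at)
  have lim: "((\<lambda>y. distF M Y s - distF M Y y) \<longlongrightarrow> distF M Y s - distF M Y s) (at_left s)"
    using isc unfolding isCont_def by (intro tendsto_diff tendsto_const) (rule tendsto_mono[OF at_le, rotated], auto)
  have "measure M {w\<in>space M. Y w = s} \<le> distF M Y s - distF M Y s"
  proof (rule tendsto_lowerbound[OF lim])
    have "s - 1 < s" by simp
    from eventually_at_left_real[OF this]
    show "\<forall>\<^sub>F y in at_left s. measure M {w\<in>space M. Y w = s} \<le> distF M Y s - distF M Y y"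
    proof (rule eventually_mono)
      fix y assume y: "y \<in> {s - 1<..<s}"
      have "{w\<in>space M. Y w \<le> s} = {w\<in>space M. Y w \<le> y} \<union> {w\<in>space M. y < Y w \<and> Y w \<le> s}" using y by auto
      then have "distF M Y s = distF M Y y + measure M {w\<in>space M. y < Y w \<and> Y w \<le> s}"
        unfolding distF_def using ev Ym by (subst finite_measure_Union[symmetric]) (auto, measurable)
      moreover have "measure M {w\<in>space M. Y w = s} \<le> measure M {w\<in>space M. y < Y w \<and> Y w \<le> s}"
        using y Ym by (intro finite_measure_mono) (auto, measurable)
      ultimately show "measure M {w\<in>space M. Y w = s} \<le> distF M Y s - distF M Y y" by simp
    qed
  qed simp
  then show ?thesis by (simp add: measure_nonneg antisym)
qed

lemma nn_integral_le_cmult: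
  fixes \<mu> :: "'b measure"
  assumes pw: "\<And>w. w \<in> space \<mu> \<Longrightarrow> f w \<le> ennreal c * g w" and c: "c \<ge> 0"
    and gm: "g \<in> borel_measurable \<mu>" and gi: "(\<integral>\<^sup>+ w. g w \<partial>\<mu>) \<le> ennreal B" and B: "B \<ge> 0"
  shows "(\<integral>\<^sup>+ w. f w \<partial>\<mu>) \<le> ennreal (c * B)"
proof -
  have "(\<integral>\<^sup>+ w. f w \<partial>\<mu>) \<le> (\<integral>\<^sup>+ w. ennreal c * g w \<partial>\<mu>)"
    by (intro nn_integral_mono pw)
  also have "\<dots> = ennreal c * (\<integral>\<^sup>+ w. g w \<partial>\<mu>)" by (rule nn_integral_cmult[OF gm])
  also have "\<dots> \<le> ennreal c * ennreal B" by (intro mult_left_mono gi) simp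
  also have "\<dots> = ennreal (c * B)" using c B by (simp add: ennreal_mult)
  finally show ?thesis .
qed

lemma nn_integral_cmult_add_le:
  fixes f g :: "'b \<Rightarrow> ennreal"
  assumes "f \<in> borel_measurable \<mu>" "g \<in> borel_measurable \<mu>"
    and "(\<integral>\<^sup>+ x. f x \<partial>\<mu>) \<le> F" "(\<integral>\<^sup>+ x. g x \<partial>\<mu>) \<le> G"
  shows "(\<integral>\<^sup>+ x. c * f x + d * g x \<partial>\<mu>) \<le> c * F + d * G"
proof -
  have "(\<integral>\<^sup>+ x. c * f x + d * g x \<partial>\<mu>) = c * (\<integral>\<^sup>+ x. f x \<partial>\<mu>) + d * (\<integral>\<^sup>+ x. g x \<partial>\<mu>)"
    using assms(1,2) by (simp add: nn_integral_add nn_integral_cmult)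
  also have "\<dots> \<le> c * F + d * G"
    using assms(3,4) by (intro add_mono mult_left_mono) auto
  finally show ?thesis .
qed

lemma abs_integral_le_nn_integral:
  fixes \<mu> :: "'b measure" and g :: "'b \<Rightarrow> real"
  assumes pw: "\<And>w. w \<in> space \<mu> \<Longrightarrow> \<bar>g w\<bar> \<le> G w"
    and gi: "(\<integral>\<^sup>+ w. ennreal (G w) \<partial>\<mu>) \<le> ennreal B" and B: "B \<ge> 0"
  shows "\<bar>integral\<^sup>L \<mu> g\<bar> \<le> B"
proof (cases "integrable \<mu> g")
  case True
  have "ennreal (norm (integral\<^sup>L \<mu> g)) \<le> (\<integral>\<^sup>+ w. ennreal (norm (g w)) \<partial>\<mu>)"
    by (rule integral_norm_bound_ennreal[OF True])
  also have "\<dots> \<le> (\<integral>\<^sup>+ w. ennreal (G w) \<partial>\<mu>)"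
    by (intro nn_integral_mono ennreal_leI) (use pw in auto)
  also have "\<dots> \<le> ennreal B" by (rule gi)
  finally show ?thesis using B by (simp add: ennreal_le_iff)
next
  case False
  then show ?thesis using B by (simp add: not_integrable_integral_eq)
qed

lemma U1_env_powr_bound:
  fixes x t A B bx \<theta> p \<beta> :: real
  assumes pos: "x > t" "t > 0" "A > 0" "B > 0" "bx > 0" "\<theta> > 0" and p: "p > 1" and bt: "\<beta> > 0"
    and bb: "1 / bx \<le> 2 powr \<beta> * (x / t) powr \<beta> * (1 / B)"
  shows "((x / t) powr \<theta> / (\<theta> * A) / bx) powr p * bx
     \<le> (\<theta> powr (-p) * A powr (-p) * 2 powr (\<beta> * (p - 1)) * B powr (1 - p)) * (x / t) powr (\<theta> * p + \<beta> * (p - 1))"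
proof -
  have y: "x / t > 0" using pos by simp
  have e1: "((x / t) powr \<theta> / (\<theta> * A) / bx) powr p * bx = ((x / t) powr (\<theta> * p) * \<theta> powr (-p) * A powr (-p)) * (1 / bx) powr (p - 1)"
    using pos y by (simp add: powr_divide powr_mult powr_powr powr_minus_divide powr_diff field_simps)
  have "(1 / bx) powr (p - 1) \<le> (2 powr \<beta> * (x / t) powr \<beta> * (1 / B)) powr (p - 1)"
    using bb pos p by (intro powr_mono2) auto
  also have "\<dots> = 2 powr (\<beta> * (p - 1)) * (x / t) powr (\<beta> * (p - 1)) * B powr (1 - p)"
    using pos y by (simp add: powr_mult powr_powr powr_divide powr_minus_divide powr_diff field_simps)
  finally have e2: "(1 / bx) powr (p - 1) \<le> 2 powr (\<beta> * (p - 1)) * (x / t) powr (\<beta> * (p - 1)) * B powr (1 - p)" .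
  have "((x / t) powr \<theta> / (\<theta> * A) / bx) powr p * bx \<le> ((x / t) powr (\<theta> * p) * \<theta> powr (-p) * A powr (-p)) * (2 powr (\<beta> * (p - 1)) * (x / t) powr (\<beta> * (p - 1)) * B powr (1 - p))"
    unfolding e1 using e2 by (intro mult_left_mono) auto
  also have "\<dots> = (\<theta> powr (-p) * A powr (-p) * 2 powr (\<beta> * (p - 1)) * B powr (1 - p)) * (x / t) powr (\<theta> * p + \<beta> * (p - 1))"
    by (simp add: powr_add)
  finally show ?thesis .
qed

lemma U2_env_powr_bound_below:
  fixes P Fc Ft bc p :: real
  assumes pos: "P > 0" "Ft > 0" "Ft \<le> Fc" "bc > 0" and p: "p > 1"
  shows "(P / (Fc * bc)) powr p * Fc \<le> (P powr p * Ft powr (1 - p)) * bc powr (-p)"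
proof -
  have Fc: "Fc > 0" using pos by simp
  have "(P / (Fc * bc)) powr p * Fc = P powr p * Fc powr (1 - p) * bc powr (-p)"
    using pos Fc by (simp add: powr_divide powr_mult powr_diff powr_minus_divide field_simps)
  also have "\<dots> \<le> P powr p * Ft powr (1 - p) * bc powr (-p)"
    using pos p by (intro mult_right_mono mult_left_mono powr_mono2') auto
  finally show ?thesis by simp
qed

lemma U2_env_powr_bound_above:
  fixes P Fc At Ac bc bt c t \<theta> p \<alpha> \<beta> l :: real
  assumes pos: "P > 0" "At > 0" "Ac > 0" "Ac \<le> Fc" "bc > 0" "bt > 0" "t > 0" "c > t" "\<theta> > 0" "\<beta> > 0"
    and p: "p > 1"
    and pa: "Ac \<le> 2 powr \<alpha> * (c / t) powr (-\<alpha>) * At"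
    and pb: "1 / bc \<le> 2 powr \<beta> * (c / t) powr \<beta> * (1 / bt)"
    and l: "\<theta> * p - \<alpha> + \<beta> * p \<le> l"
  shows "(P * (c / t) powr \<theta> * Ac / At / (Fc * bc)) powr p * Fc
    \<le> (P powr p * 2 powr \<alpha> * 2 powr (\<beta> * p) * At powr (1 - p) * bt powr (-p)) * (c / t) powr l"
proof -
  have Fc: "Fc > 0" using pos by simp
  have y: "c / t > 1" using pos by simp
  have "(P * (c / t) powr \<theta> * Ac / At / (Fc * bc)) powr p * Fc
      = P powr p * (c / t) powr (\<theta> * p) * Ac powr p * At powr (-p) * Fc powr (1 - p) * (1 / bc) powr p"
    using pos Fc y by (simp add: powr_divide powr_mult powr_powr powr_diff powr_minus_divide field_simps)
  also have "\<dots> \<le> P powr p * (c / t) powr (\<theta> * p) * Ac powr p * At powr (-p) * Ac powr (1 - p) * (1 / bc) powr p"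
    using pos p by (intro mult_right_mono mult_left_mono powr_mono2') auto
  also have "\<dots> = P powr p * (c / t) powr (\<theta> * p) * Ac * At powr (-p) * (1 / bc) powr p"
    using pos by (simp add: powr_add[symmetric])
  also have "\<dots> \<le> P powr p * (c / t) powr (\<theta> * p) * (2 powr \<alpha> * (c / t) powr (-\<alpha>) * At) * At powr (-p)
       * (2 powr \<beta> * (c / t) powr \<beta> * (1 / bt)) powr p"
  proof -
    have h2: "(1 / bc) powr p \<le> (2 powr \<beta> * (c / t) powr \<beta> * (1 / bt)) powr p"
      using pos p pb by (intro powr_mono2) auto
    have "P powr p * (c / t) powr (\<theta> * p) * Ac * At powr (-p)
      \<le> P powr p * (c / t) powr (\<theta> * p) * (2 powr \<alpha> * (c / t) powr (-\<alpha>) * At) * At powr (-p)"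
      using pa by (intro mult_right_mono mult_left_mono) auto
    then show ?thesis by (rule mult_mono[OF _ h2]) (use pos in auto)
  qed
  also have "\<dots> = (P powr p * 2 powr \<alpha> * 2 powr (\<beta> * p) * At powr (1 - p) * bt powr (-p)) * (c / t) powr (\<theta> * p - \<alpha> + \<beta> * p)"
  proof -
    have e1: "(2 powr \<beta> * (c / t) powr \<beta> * (1 / bt)) powr p = 2 powr (\<beta> * p) * (c / t) powr (\<beta> * p) * bt powr (-p)"
      using pos by (simp add: powr_def ln_mult ln_div exp_add[symmetric] exp_diff[symmetric] algebra_simps)
    have e2: "At * At powr (-p) = At powr (1 - p)" using pos by (simp add: powr_diff powr_minus_divide)
    have e3: "(c / t) powr (\<theta> * p) * (c / t) powr (-\<alpha>) * (c / t) powr (\<beta> * p) = (c / t) powr (\<theta> * p - \<alpha> + \<beta> * p)"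
      by (simp add: powr_add[symmetric])
    show ?thesis unfolding e1 using e2 e3 by (simp add: mult_ac)
  qed
  also have "\<dots> \<le> (P powr p * 2 powr \<alpha> * 2 powr (\<beta> * p) * At powr (1 - p) * bt powr (-p)) * (c / t) powr l"
    using pos y l by (intro mult_left_mono powr_mono) auto
  finally show ?thesis .
qed

lemma dC_env_bound_above:
  fixes P At Ac bc bt c t \<alpha> \<beta> lm \<theta> l :: real
  assumes pos: "P > 0" "At > 0" "Ac > 0" "bc > 0" "bt > 0" "t > 0" "c > t"
    and pa: "Ac \<le> 2 powr \<alpha> * (c / t) powr (-\<alpha>) * At"
    and pb: "1 / bc \<le> 2 powr \<beta> * (c / t) powr \<beta> * (1 / bt)"
    and l: "lm + \<theta> - \<alpha> + \<beta> \<le> l"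
  shows "(c / t) powr lm * (P * (c / t) powr \<theta> * Ac / At) / bc \<le> (P * 2 powr \<alpha> * 2 powr \<beta> / bt) * (c / t) powr l"
proof -
  have y: "c / t > 1" using pos by simp
  have "(c / t) powr lm * (P * (c / t) powr \<theta> * Ac / At) / bc = ((c / t) powr lm * P * (c / t) powr \<theta> / At) * Ac * (1 / bc)"
    by simp
  also have "\<dots> \<le> ((c / t) powr lm * P * (c / t) powr \<theta> / At) * (2 powr \<alpha> * (c / t) powr (-\<alpha>) * At) * (2 powr \<beta> * (c / t) powr \<beta> * (1 / bt))"
    using pos pa pb by (intro mult_mono) auto
  also have "\<dots> = (P * 2 powr \<alpha> * 2 powr \<beta> / bt) * (c / t) powr (lm + \<theta> - \<alpha> + \<beta>)"
    using pos by (simp add: powr_add powr_diff powr_minus_divide field_simps)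
  also have "\<dots> \<le> (P * 2 powr \<alpha> * 2 powr \<beta> / bt) * (c / t) powr l"
    using pos y l by (intro mult_left_mono powr_mono) auto
  finally show ?thesis .
qed

lemma powr_add_le:
  fixes x y q :: real
  assumes "x \<ge> 0" "y \<ge> 0" "q > 0"
  shows "(x + y) powr q \<le> 2 powr q * (x powr q + y powr q)"
proof -
  have "(x + y) powr q \<le> (2 * max x y) powr q" using assms by (intro powr_mono2) auto
  also have "\<dots> = 2 powr q * max x y powr q" using assms by (simp add: powr_mult)
  also have "max x y powr q \<le> x powr q + y powr q" using assms by (simp add: max_def)
  finally show ?thesis by simp
qed

lemma powr_rate_identity:
  fixes n A p :: real
  assumes n: "n > 0" and A: "A > 0"
  shows "n * ((sqrt (n * A) / n) powr p * A powr (1 - p)) = (n * A) powr (1 - p / 2)"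
proof -
  obtain u where u: "n = exp u" using n by (metis exp_ln)
  obtain w where w: "A = exp w" using A by (metis exp_ln)
  have s: "sqrt (n * A) = exp ((u + w) / 2)"
  proof -
    have "n * A = exp (u + w)" unfolding u w by (simp add: exp_add)
    moreover have "sqrt (exp (u + w)) = exp ((u + w) / 2)"
      by (rule real_sqrt_unique) (simp_all add: power2_eq_square exp_add[symmetric])
    ultimately show ?thesis by simp
  qed
  show ?thesis unfolding s unfolding u w
    by (simp add: powr_def exp_add[symmetric] exp_diff[symmetric] algebra_simps; simp add: field_simps)
qed

text \<open>These are the constraints of the locale below for p = 2 + theta, alpha = A - theta,
  beta = B + theta, beta' = B - theta and eta - theta. They all hold strictly at theta = 0 because
  0 < B < A, so a small enough theta satisfies them.\<close>

lemma small_exponent_exists: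
  fixes A B \<eta> :: real
  assumes B: "0 < B" and AB: "B < A" and \<eta>: "0 < \<eta>"
  obtains \<theta> where "0 < \<theta>" "\<theta> \<le> 1" "0 < A - \<theta>" "0 < B - \<theta>" "0 < \<eta> - \<theta>"
    "\<theta> * (2 + \<theta>) + (B + \<theta>) * (2 + \<theta> - 1) < A - \<theta>"
    "max (\<theta> * (2 + \<theta>) - (A - \<theta>) + (B + \<theta>) * (2 + \<theta>)) 0 < B - \<theta>"
    "(\<theta> + (B + \<theta>)) * (2 + \<theta> - 1) < (B - \<theta>) + (\<eta> - \<theta>)"
    "max (\<theta> - (A - \<theta>) + (\<theta> + (B + \<theta>)) * (2 + \<theta> - 1) + (B + \<theta>)) 0 < B - \<theta>"
    "\<theta> < A - \<theta>"
proof -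
  define m where "m = min 1 (min (B / 2) (min (A - B) \<eta>))"
  have m: "m > 0" "m \<le> 1" "m \<le> B / 2" "m \<le> A - B" "m \<le> \<eta>"
    using B AB \<eta> unfolding m_def by (auto simp: min_def)
  define e where "e = m / (10 + B)"
  have e0: "e > 0" using m B by (simp add: e_def)
  have "10 * e + B * e = (10 + B) * e" by (simp add: algebra_simps)
  then have em: "10 * e + B * e = m" using B unfolding e_def by simp
  have be: "B * e \<ge> 0" using B e0 by simp
  have e1: "e \<le> 1" using em be m by linarith
  have ee: "e * e \<le> e" using e0 e1 by (simp add: mult_le_cancel_left1)
  have key: "2 * B - A + 5 * e + B * e + 2 * (e * e) < B - e"
    using em be m ee e0 by linarith
  have Be: "0 < B - e" using em be m e0 by linarith
  show ?thesis
  proof (rule that[of e])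
    have "e * (2 + e) + (B + e) * (2 + e - 1) = B + 3 * e + B * e + 2 * (e * e)"
      by (simp add: algebra_simps)
    then show "e * (2 + e) + (B + e) * (2 + e - 1) < A - e"
      using em be m ee e0 by linarith
    have "e * (2 + e) - (A - e) + (B + e) * (2 + e) = 2 * B - A + 5 * e + B * e + 2 * (e * e)"
      by (simp add: algebra_simps)
    then show "max (e * (2 + e) - (A - e) + (B + e) * (2 + e)) 0 < B - e"
      using key Be by simp
    have "(e + (B + e)) * (2 + e - 1) = B + B * e + 2 * e + 2 * (e * e)"
      by (simp add: algebra_simps)
    then show "(e + (B + e)) * (2 + e - 1) < (B - e) + (\<eta> - e)"
      using em be m ee e0 by linarith
    have "e - (A - e) + (e + (B + e)) * (2 + e - 1) + (B + e) = 2 * B - A + 5 * e + B * e + 2 * (e * e)"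
      by (simp add: algebra_simps)
    then show "max (e - (A - e) + (e + (B + e)) * (2 + e - 1) + (B + e)) 0 < B - e"
      using key Be by simp
  qed (use em be m e0 e1 B AB \<eta> in linarith)+
qed

section \<open>Moment bounds under doubling conditions on the tails\<close>

text \<open>
  Beyond T, alpha is a doubling exponent of Fbar^(k), beta and beta' bound that of Gbar from
  below and above, and eta is one of Fbar. The envelope exponent theta and the moment order p
  are tied to them by c1-c5, which are exactly the conditions making the dyadic series in the
  moment bounds below converge.
\<close>

locale doubling_tails =
  fixes M :: "'a measure" and X1 :: "'a \<Rightarrow> real" and Cau1 :: "'a \<Rightarrow> nat" and C1 :: "'a \<Rightarrow> real"
    and K k :: nat and T \<theta> p \<alpha> \<beta> \<beta>' \<eta> :: real
  assumes P: "prob_space M"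
    and Xm: "X1 \<in> borel_measurable M" and Cm: "C1 \<in> borel_measurable M"
    and Caum: "Cau1 \<in> measurable M (count_space UNIV)"
    and rng: "\<forall>w\<in>space M. X1 w \<ge> 0 \<and> C1 w \<ge> 0 \<and> Cau1 w \<in> {1..K}"
    and kK: "k \<in> {1..K}"
    and contX: "continuous_on UNIV (distF M X1)" and contC: "continuous_on UNIV (distF M C1)"
    and T: "T > 0"
    and rate_a: "\<forall>s\<ge>T. subFbar M X1 Cau1 k s > 0 \<and> subFbar M X1 Cau1 k (2 * s) \<le> 2 powr (-\<alpha>) * subFbar M X1 Cau1 k s"
    and rate_b1: "\<forall>s\<ge>T. Gbar M C1 s > 0 \<and> 2 powr (-\<beta>) * Gbar M C1 s \<le> Gbar M C1 (2 * s)"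
    and rate_b2: "\<forall>s\<ge>T. Gbar M C1 (2 * s) \<le> 2 powr (-\<beta>') * Gbar M C1 s"
    and rate_F: "\<forall>s\<ge>T. Fbar M X1 Cau1 K (2 * s) \<le> 2 powr (-\<eta>) * Fbar M X1 Cau1 K s"
    and th: "0 < \<theta>" "\<theta> \<le> 1" and p2: "p > 2" and pos: "\<alpha> > 0" "\<beta> > 0" "\<beta>' > 0" "\<eta> > 0"
    and c1: "\<theta> * p + \<beta> * (p - 1) < \<alpha>"
    and c2: "max (\<theta> * p - \<alpha> + \<beta> * p) 0 < \<beta>'"
    and c3: "(\<theta> + \<beta>) * (p - 1) < \<beta>' + \<eta>"
    and c4: "max (\<theta> - \<alpha> + (\<theta> + \<beta>) * (p - 1) + \<beta>) 0 < \<beta>'"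
    and c5: "\<theta> < \<alpha>"
begin

abbreviation "a \<equiv> subFbar M X1 Cau1 k"
abbreviation "b \<equiv> Gbar M C1"
abbreviation "Fb \<equiv> Fbar M X1 Cau1 K"
abbreviation "h \<equiv> Hbar M X1 Cau1 C1 K"

sublocale prob_space M by (rule P)

declare Xm[measurable] Cm[measurable] Caum[measurable]

lemma X1_events: "{w\<in>space M. X1 w > s} \<in> sets M" "{w\<in>space M. X1 w \<ge> s} \<in> sets M"
  "{w\<in>space M. X1 w \<le> s} \<in> sets M" "{w\<in>space M. X1 w = s} \<in> sets M"
  "{w\<in>space M. X1 w > s \<and> Cau1 w = j} \<in> sets M" "{w\<in>space M. X1 w \<ge> s \<and> Cau1 w = j} \<in> sets M"
  "{w\<in>space M. Cau1 w = j \<and> X1 w \<ge> s} \<in> sets M"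
  using Xm Caum by measurable

lemma C1_events: "{w\<in>space M. C1 w > s} \<in> sets M" "{w\<in>space M. C1 w \<ge> s} \<in> sets M"
  "{w\<in>space M. C1 w \<le> s} \<in> sets M" "{w\<in>space M. C1 w = s} \<in> sets M"
  using Cm by measurable

lemma b_eq_prob_gt: "b s = measure M {w\<in>space M. C1 w > s}"
proof -
  have "{w\<in>space M. C1 w > s} = space M - {w\<in>space M. C1 w \<le> s}" by auto
  then show ?thesis unfolding Gbar_def distF_def using C1_events by (simp add: prob_compl)
qed

lemma Fb_eq_prob_gt: "Fb s = measure M {w\<in>space M. X1 w > s}"
proof -
  have "Fb s = (\<Sum>j\<in>{1..K}. measure M {w\<in>space M. X1 w > s \<and> Cau1 w = j})"
    unfolding Fbar_def subFbar_def by simp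
  also have "\<dots> = measure M (\<Union>j\<in>{1..K}. {w\<in>space M. X1 w > s \<and> Cau1 w = j})"
    by (rule finite_measure_finite_Union[symmetric]) (auto simp: disjoint_family_on_def X1_events)
  also have "(\<Union>j\<in>{1..K}. {w\<in>space M. X1 w > s \<and> Cau1 w = j}) = {w\<in>space M. X1 w > s}"
    using rng by auto
  finally show ?thesis .
qed

lemma Fb_eq_1_minus_distF: "Fb s = 1 - distF M X1 s"
proof -
  have "{w\<in>space M. X1 w > s} = space M - {w\<in>space M. X1 w \<le> s}" by auto
  then show ?thesis unfolding Fb_eq_prob_gt distF_def using X1_events by (simp add: prob_compl)
qed

lemma a_eq_prob_gt: "a s = measure M {w\<in>space M. X1 w > s \<and> Cau1 w = k}"
  unfolding subFbar_def by simp

lemma X1_no_atom: "measure M {w\<in>space M. X1 w = s} = 0"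
  by (rule continuous_distF_imp_no_atom[OF P Xm contX])

lemma C1_no_atom: "measure M {w\<in>space M. C1 w = s} = 0"
  by (rule continuous_distF_imp_no_atom[OF P Cm contC])

lemma prob_ge_eq_a: "measure M {w\<in>space M. X1 w \<ge> s \<and> Cau1 w = k} = a s"
proof -
  define A where "A = {w\<in>space M. X1 w > s \<and> Cau1 w = k}"
  define B where "B = {w\<in>space M. X1 w = s} \<inter> {w\<in>space M. Cau1 w = k}"
  have kev: "{w\<in>space M. Cau1 w = k} \<in> sets M" using Caum by measurable
  have e: "{w\<in>space M. X1 w \<ge> s \<and> Cau1 w = k} = A \<union> B" unfolding A_def B_def by auto
  have B0: "measure M B = 0"
  proof -
    have "measure M B \<le> measure M {w\<in>space M. X1 w = s}"
      unfolding B_def using X1_events kev by (intro finite_measure_mono) auto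
    then show ?thesis using X1_no_atom by (simp add: measure_nonneg antisym)
  qed
  have "measure M (A \<union> B) = measure M A + measure M B"
    by (rule finite_measure_Union) (auto simp: A_def B_def X1_events kev)
  then show ?thesis using e B0 by (simp add: a_eq_prob_gt A_def)
qed

lemma prob_ge_eq_b: "measure M {w\<in>space M. C1 w \<ge> s} = b s"
proof -
  have e: "{w\<in>space M. C1 w \<ge> s} = {w\<in>space M. C1 w > s} \<union> {w\<in>space M. C1 w = s}" by auto
  have "measure M ({w\<in>space M. C1 w > s} \<union> {w\<in>space M. C1 w = s}) = measure M {w\<in>space M. C1 w > s} + measure M {w\<in>space M. C1 w = s}"
    by (rule finite_measure_Union) (auto simp: C1_events)
  then show ?thesis using e C1_no_atom by (simp add: b_eq_prob_gt)
qed

lemma prob_ge_eq_Fb: "measure M {w\<in>space M. X1 w \<ge> s} = Fb s"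
proof -
  have e: "{w\<in>space M. X1 w \<ge> s} = {w\<in>space M. X1 w > s} \<union> {w\<in>space M. X1 w = s}" by auto
  have "measure M ({w\<in>space M. X1 w > s} \<union> {w\<in>space M. X1 w = s}) = measure M {w\<in>space M. X1 w > s} + measure M {w\<in>space M. X1 w = s}"
    by (rule finite_measure_Union) (auto simp: X1_events)
  then show ?thesis using e X1_no_atom by (simp add: Fb_eq_prob_gt)
qed

lemma a_mono: "x \<le> y \<Longrightarrow> a y \<le> a x"
  unfolding a_eq_prob_gt by (intro finite_measure_mono) (auto simp: X1_events)

lemma b_mono: "x \<le> y \<Longrightarrow> b y \<le> b x"
  unfolding b_eq_prob_gt by (intro finite_measure_mono) (auto simp: C1_events)

lemma Fb_mono: "x \<le> y \<Longrightarrow> Fb y \<le> Fb x"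
  unfolding Fb_eq_prob_gt by (intro finite_measure_mono) (auto simp: X1_events)

lemma a_le_Fb: "a s \<le> Fb s"
  unfolding a_eq_prob_gt Fb_eq_prob_gt by (intro finite_measure_mono) (auto simp: X1_events)

lemma a_le1: "a s \<le> 1" unfolding a_eq_prob_gt by simp
lemma b_le1: "b s \<le> 1" unfolding b_eq_prob_gt by simp
lemma Fb_le1: "Fb s \<le> 1" unfolding Fb_eq_prob_gt by simp

lemma a_pos: "a s > 0"
proof (cases "s \<ge> T")
  case True then show ?thesis using rate_a by blast
next
  case False
  then have "a T \<le> a s" by (intro a_mono) simp
  moreover have "a T > 0" using rate_a by simp
  ultimately show ?thesis by simp
qed

lemma b_pos: "b s > 0"
proof (cases "s \<ge> T")
  case True then show ?thesis using rate_b1 by blast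
next
  case False
  then have "b T \<le> b s" by (intro b_mono) simp
  moreover have "b T > 0" using rate_b1 by simp
  ultimately show ?thesis by simp
qed

lemma Fb_pos: "Fb s > 0" using a_pos a_le_Fb less_le_trans by blast

lemma a_nn: "a s \<ge> 0" using a_pos[of s] by simp
lemma b_nn: "b s \<ge> 0" using b_pos[of s] by simp
lemma Fb_nn: "Fb s \<ge> 0" using Fb_pos[of s] by simp

lemma h_eq: "h s = Fb s * b s" unfolding Hbar_def by simp

lemma h_pos: "h s > 0" using Fb_pos b_pos h_eq by simp

lemma h_mono: "x \<le> y \<Longrightarrow> h y \<le> h x"
  unfolding h_eq using Fb_mono b_mono Fb_pos b_pos by (simp add: mult_mono less_imp_le)

lemma ab_le_h: "a s * b s \<le> h s"
  unfolding h_eq using a_le_Fb b_pos by (simp add: mult_right_mono)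

lemma b_cont: "continuous_on UNIV b"
  unfolding Gbar_def by (intro continuous_on_diff continuous_on_const contC)

lemma Fb_cont: "continuous_on UNIV Fb"
  unfolding Fb_eq_1_minus_distF by (intro continuous_on_diff continuous_on_const contX)

lemma h_cont: "continuous_on UNIV h"
  unfolding h_eq by (intro continuous_on_mult Fb_cont b_cont)

lemma a_potter: "T \<le> t \<Longrightarrow> t \<le> x \<Longrightarrow> a x \<le> 2 powr \<alpha> * (x / t) powr (-\<alpha>) * a t"
  by (rule potter_bound_decreasing[of T a \<alpha>]) (use a_mono rate_a pos T a_nn in auto)

lemma binv_potter: "T \<le> t \<Longrightarrow> t \<le> x \<Longrightarrow> 1 / b x \<le> 2 powr \<beta> * (x / t) powr \<beta> * (1 / b t)"
proof (rule potter_bound_increasing[of T "\<lambda>s. 1 / b s" \<beta>])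
  show "\<forall>s\<ge>T. 1 / b (2 * s) \<le> 2 powr \<beta> * (1 / b s)"
  proof (intro allI impI)
    fix s assume s: "s \<ge> T"
    have "2 powr (-\<beta>) * b s \<le> b (2 * s)" using rate_b1 s by blast
    then have "1 / b (2 * s) \<le> 1 / (2 powr (-\<beta>) * b s)"
      using b_pos by (intro divide_left_mono) auto
    also have "\<dots> = 2 powr \<beta> * (1 / b s)" by (simp add: powr_minus_divide)
    finally show "1 / b (2 * s) \<le> 2 powr \<beta> * (1 / b s)" .
  qed
  show "\<And>x y. T \<le> x \<Longrightarrow> x \<le> y \<Longrightarrow> 1 / b x \<le> 1 / b y"
    using b_mono b_pos by (simp add: frac_le)
qed (use pos T b_nn in auto)

lemma h_doubling: "\<forall>s\<ge>T. h (2 * s) \<le> 2 powr (-(\<beta>' + \<eta>)) * h s"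
proof (intro allI impI)
  fix s assume s: "s \<ge> T"
  have "h (2 * s) = Fb (2 * s) * b (2 * s)" by (rule h_eq)
  also have "\<dots> \<le> (2 powr (-\<eta>) * Fb s) * (2 powr (-\<beta>') * b s)"
    using rate_F rate_b2 s Fb_pos b_pos by (intro mult_mono) (auto intro: less_imp_le)
  also have "\<dots> = 2 powr (-(\<beta>' + \<eta>)) * h s"
    by (simp add: h_eq powr_add[symmetric] algebra_simps)
  finally show "h (2 * s) \<le> 2 powr (-(\<beta>' + \<eta>)) * h s" .
qed

text \<open>N is the law of one observation ((X_i, Cau_i), C_i): lifetime and cause are independent
  of the censoring time.\<close>

abbreviation "P1 \<equiv> distr M (borel \<Otimes>\<^sub>M count_space UNIV) (\<lambda>w. (X1 w, Cau1 w))"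
abbreviation "Q \<equiv> distr M borel C1"
abbreviation "N \<equiv> P1 \<Otimes>\<^sub>M Q"

lemma XCau_measurable: "(\<lambda>w. (X1 w, Cau1 w)) \<in> measurable M (borel \<Otimes>\<^sub>M count_space UNIV)"
  using Xm Caum by measurable

lemma P1_prob: "prob_space P1" by (rule prob_space_distr[OF XCau_measurable])
lemma Q_prob: "prob_space Q" by (rule prob_space_distr[OF Cm])

sublocale PP: pair_prob_space P1 Q
  by (simp add: pair_prob_space_def pair_sigma_finite_def P1_prob Q_prob prob_space_imp_sigma_finite)

lemma N_prob: "prob_space N" by (rule PP.prob_space_axioms)

lemma space_N: "space N = UNIV" by (simp add: space_pair_measure)

lemma emeasure_P1: "A \<in> sets (borel \<Otimes>\<^sub>M count_space UNIV) \<Longrightarrow>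
    emeasure P1 A = emeasure M {w\<in>space M. (X1 w, Cau1 w) \<in> A}"
  by (subst emeasure_distr[OF XCau_measurable]) (auto intro!: arg_cong[where f="emeasure M"])

lemma emeasure_Q: "A \<in> sets borel \<Longrightarrow> emeasure Q A = emeasure M {w\<in>space M. C1 w \<in> A}"
  by (subst emeasure_distr[OF Cm]) (auto intro!: arg_cong[where f="emeasure M"])

lemma emeasure_Z_ge: "emeasure N {\<omega>\<in>space N. min (fst (fst \<omega>)) (snd \<omega>) \<ge> s} = ennreal (h s)"
proof -
  have e: "{\<omega>\<in>space N. min (fst (fst \<omega>)) (snd \<omega>) \<ge> s} = {xj. fst xj \<ge> s} \<times> {c. c \<ge> s}"
    by (auto simp: space_N)
  have m1: "{xj::real\<times>nat. fst xj \<ge> s} \<in> sets (borel \<Otimes>\<^sub>M count_space UNIV)"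
  proof -
    have "{xj::real\<times>nat. fst xj \<ge> s} = {xj \<in> space (borel \<Otimes>\<^sub>M count_space UNIV). fst xj \<ge> s}"
      by (simp add: space_pair_measure)
    also have "\<dots> \<in> sets (borel \<Otimes>\<^sub>M count_space UNIV)" by measurable
    finally show ?thesis .
  qed
  have m2: "{c::real. c \<ge> s} \<in> sets borel" by measurable
  have "emeasure N ({xj. fst xj \<ge> s} \<times> {c. c \<ge> s}) = emeasure P1 {xj. fst xj \<ge> s} * emeasure Q {c. c \<ge> s}"
    using m1 m2 by (intro PP.M2.emeasure_pair_measure_Times) auto
  also have "emeasure P1 {xj. fst xj \<ge> s} = ennreal (Fb s)"
    using m1 by (simp add: emeasure_P1 emeasure_eq_measure prob_ge_eq_Fb)
  also have "emeasure Q {c. c \<ge> s} = ennreal (b s)"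
    using m2 by (simp add: emeasure_Q emeasure_eq_measure prob_ge_eq_b)
  finally show ?thesis using e by (simp add: h_eq ennreal_mult Fb_nn b_nn)
qed

lemma measure_Z_gt: "measure N {\<omega>\<in>space N. min (fst (fst \<omega>)) (snd \<omega>) > s} = h s"
proof -
  have e: "{\<omega>\<in>space N. min (fst (fst \<omega>)) (snd \<omega>) > s} = {xj. fst xj > s} \<times> {c. c > s}"
    by (auto simp: space_N)
  have m1: "{xj::real\<times>nat. fst xj > s} \<in> sets (borel \<Otimes>\<^sub>M count_space UNIV)"
  proof -
    have "{xj::real\<times>nat. fst xj > s} = {xj \<in> space (borel \<Otimes>\<^sub>M count_space UNIV). fst xj > s}"
      by (simp add: space_pair_measure)
    also have "\<dots> \<in> sets (borel \<Otimes>\<^sub>M count_space UNIV)" by measurable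
    finally show ?thesis .
  qed
  have m2: "{c::real. c > s} \<in> sets borel" by measurable
  have "emeasure N ({xj. fst xj > s} \<times> {c. c > s}) = emeasure P1 {xj. fst xj > s} * emeasure Q {c. c > s}"
    using m1 m2 by (intro PP.M2.emeasure_pair_measure_Times) auto
  also have "emeasure P1 {xj. fst xj > s} = ennreal (Fb s)"
    using m1 by (simp add: emeasure_P1 emeasure_eq_measure Fb_eq_prob_gt)
  also have "emeasure Q {c. c > s} = ennreal (b s)"
    using m2 by (simp add: emeasure_Q emeasure_eq_measure b_eq_prob_gt)
  finally have "emeasure N {\<omega>\<in>space N. min (fst (fst \<omega>)) (snd \<omega>) > s} = ennreal (h s)"
    using e by (simp add: h_eq ennreal_mult Fb_nn b_nn)
  then show ?thesis
    using h_pos by (simp add: PP.emeasure_eq_measure less_imp_le)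
qed

lemma b_meas: "b \<in> borel_measurable borel"
proof -
  have "mono (\<lambda>s. - b s)" by (auto simp: mono_def intro: b_mono)
  then have "(\<lambda>s. - b s) \<in> borel_measurable borel" by (rule borel_measurable_mono)
  then have "(\<lambda>s. - (- b s)) \<in> borel_measurable borel" by measurable
  then show ?thesis by simp
qed

lemma a_meas: "a \<in> borel_measurable borel"
proof -
  have "mono (\<lambda>s. - a s)" by (auto simp: mono_def intro: a_mono)
  then have "(\<lambda>s. - a s) \<in> borel_measurable borel" by (rule borel_measurable_mono)
  then have "(\<lambda>s. - (- a s)) \<in> borel_measurable borel" by measurable
  then show ?thesis by simp
qed

lemma Fb_meas: "Fb \<in> borel_measurable borel"
proof -
  have "mono (\<lambda>s. - Fb s)" by (auto simp: mono_def intro: Fb_mono)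
  then have "(\<lambda>s. - Fb s) \<in> borel_measurable borel" by (rule borel_measurable_mono)
  then have "(\<lambda>s. - (- Fb s)) \<in> borel_measurable borel" by measurable
  then show ?thesis by simp
qed

lemma h_meas: "h \<in> borel_measurable borel"
  unfolding h_eq using Fb_meas b_meas by measurable

lemma tail_moment_X:
  assumes l: "0 \<le> l" "l < \<alpha>" and s: "s \<ge> T"
  shows "(\<integral>\<^sup>+ w. ennreal (if Cau1 w = k \<and> X1 w \<ge> s then (X1 w / s) powr l else 0) \<partial>M)
     \<le> ennreal (2 powr l / (1 - 2 powr l * 2 powr (-\<alpha>)) * a s)"
proof (rule nn_integral_tail_powr_le[of X1 M "\<lambda>w. Cau1 w = k" T a "2 powr (-\<alpha>)" l s])
  show "{x \<in> space M. Cau1 x = k} \<in> sets M" using Caum by measurable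
  show "\<forall>s\<ge>T. emeasure M {x \<in> space M. Cau1 x = k \<and> s \<le> X1 x} \<le> ennreal (a s)"
    using prob_ge_eq_a by (simp add: emeasure_eq_measure conj_commute X1_events)
  show "2 powr l * 2 powr - \<alpha> < 1"
    using l by (simp add: powr_add[symmetric] powr_less_one)
qed (use Xm rate_a a_nn l T s in auto)

lemma tail_moment_C:
  assumes l: "0 \<le> l" "l < \<beta>'" and s: "s \<ge> T"
  shows "(\<integral>\<^sup>+ w. ennreal (if C1 w \<ge> s then (C1 w / s) powr l else 0) \<partial>M)
     \<le> ennreal (2 powr l / (1 - 2 powr l * 2 powr (-\<beta>')) * b s)"
proof -
  have "2 powr l * 2 powr - \<beta>' < 1"
    using l by (simp add: powr_add[symmetric] powr_less_one)
  moreover have "\<forall>s\<ge>T. emeasure M {x \<in> space M. True \<and> s \<le> C1 x} \<le> ennreal (b s)"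
    using prob_ge_eq_b by (simp add: emeasure_eq_measure C1_events)
  ultimately show ?thesis
    using nn_integral_tail_powr_le[of C1 M "\<lambda>_. True" T b "2 powr (-\<beta>')" l s] Cm rate_b2 b_nn l T s
    by simp
qed

lemma Z_measurable: "(\<lambda>\<omega>::(real\<times>nat)\<times>real. min (fst (fst \<omega>)) (snd \<omega>)) \<in> borel_measurable N"
  by measurable

lemma tail_moment_Z:
  assumes l: "0 \<le> l" "l < \<beta>' + \<eta>" and s: "s \<ge> T"
  shows "(\<integral>\<^sup>+ \<omega>. ennreal (if min (fst (fst \<omega>)) (snd \<omega>) \<ge> s then (min (fst (fst \<omega>)) (snd \<omega>) / s) powr l else 0) \<partial>N)
     \<le> ennreal (2 powr l / (1 - 2 powr l * 2 powr (-(\<beta>' + \<eta>))) * h s)"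
proof -
  have "2 powr l * 2 powr - (\<beta>' + \<eta>) < 1"
    using l by (simp add: powr_add[symmetric] powr_less_one)
  moreover have "\<forall>s\<ge>T. emeasure N {x \<in> space N. True \<and> s \<le> min (fst (fst x)) (snd x)} \<le> ennreal (h s)"
    using emeasure_Z_ge by simp
  moreover have "\<forall>s\<ge>T. 0 \<le> h s" using h_pos less_imp_le by blast
  moreover have "{x \<in> space N. True} \<in> sets N"
    using sets.top[of "(borel \<Otimes>\<^sub>M count_space UNIV) \<Otimes>\<^sub>M (borel::real measure)"]
    by (simp add: space_N space_pair_measure)
  ultimately show ?thesis
    using nn_integral_tail_powr_le[of "\<lambda>\<omega>. min (fst (fst \<omega>)) (snd \<omega>)" N "\<lambda>_. True" T h "2 powr (-(\<beta>'+\<eta>))" l s]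
      Z_measurable h_doubling l T s
    by simp
qed

lemma b_C1_subuniform: "\<forall>u>0. emeasure M {x\<in>space M. b (C1 x) < u} \<le> ennreal u"
proof (rule survival_transform_subuniform[OF P Cm b_eq_prob_gt b_cont])
  have "{w\<in>space M. C1 w > -1} = space M" using rng by force
  then show "b (-1) = 1" by (simp add: b_eq_prob_gt prob_space)
qed

lemma h_Z_subuniform: "\<forall>u>0. emeasure N {x\<in>space N. h (min (fst (fst x)) (snd x)) < u} \<le> ennreal u"
proof (rule survival_transform_subuniform[OF N_prob Z_measurable measure_Z_gt[symmetric] h_cont])
  have "h (-1) = Fb (-1) * b (-1)" by (rule h_eq)
  moreover have "{w\<in>space M. C1 w > -1} = space M" using rng by force
  moreover have "{w\<in>space M. X1 w > -1} = space M" using rng by force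
  ultimately show "h (-1) = 1" by (simp add: b_eq_prob_gt Fb_eq_prob_gt prob_space)
qed

lemma level_moment_C:
  assumes q: "q > 1"
  shows "(\<integral>\<^sup>+ w. ennreal (if b (C1 w) \<ge> b s then b (C1 w) powr (-q) else 0) \<partial>M)
     \<le> ennreal (2 / (1 - 2 powr (1-q)) * b s powr (1-q))"
  by (rule nn_integral_level_powr_le[OF _ b_C1_subuniform q b_pos]) (use Cm b_meas in measurable)

lemma level_moment_Z:
  assumes q: "q > 1"
  shows "(\<integral>\<^sup>+ \<omega>. ennreal (if h (min (fst (fst \<omega>)) (snd \<omega>)) \<ge> h s then h (min (fst (fst \<omega>)) (snd \<omega>)) powr (-q) else 0) \<partial>N)
     \<le> ennreal (2 / (1 - 2 powr (1-q)) * h s powr (1-q))"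
  by (rule nn_integral_level_powr_le[OF _ h_Z_subuniform q h_pos]) (use Z_measurable h_meas in measurable)

text \<open>
  env t dominates both phi_n and g_n for the threshold t_n = t. The functions psi_env,
  intdC_env, U1_env and U2_env defined below are the resulting bounds on psi, on the dC-integral
  and on the two other terms of U, for every f below env t (see abs_Ufun_le).
\<close>

definition env :: "real \<Rightarrow> real \<Rightarrow> real" where
  "env t x = (if x > t then (x / t) powr \<theta> / (\<theta> * a t) else 0)"

definition psi_const :: real where "psi_const = 2 powr \<theta> / (1 - 2 powr \<theta> * 2 powr (-\<alpha>))"

lemma psi_const_pos: "psi_const > 0"
proof -
  have "2 powr \<theta> * 2 powr (-\<alpha>) < 1" using c5 by (simp add: powr_add[symmetric] powr_less_one)
  then show ?thesis unfolding psi_const_def by simp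
qed

definition psi_env :: "real \<Rightarrow> real \<Rightarrow> real" where
  "psi_env t z = psi_const / \<theta> * (max z t / t) powr \<theta> * a (max z t) / a t"

lemma psi_env_nn: "psi_env t z \<ge> 0"
  unfolding psi_env_def using psi_const_pos th a_pos[of t] a_pos[of "max z t"] by simp

lemma psi_env_le: "z \<le> t \<Longrightarrow> t > 0 \<Longrightarrow> psi_env t z = psi_const / \<theta>"
  unfolding psi_env_def using a_pos[of t] by (simp add: max_def)

lemma env_nn: "t > 0 \<Longrightarrow> env t x \<ge> 0"
  unfolding env_def using th a_pos[of t] by simp

lemma nn_integral_env_tail_le:
  assumes t: "t \<ge> T"
  shows "(\<integral>\<^sup>+ w. ennreal (if Cau1 w = k \<and> X1 w > z then env t (X1 w) else 0) \<partial>M) \<le> ennreal (psi_env t z)"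
proof -
  define s where "s = max z t"
  have tp: "t > 0" using t T by simp
  have s: "s \<ge> T" "s \<ge> t" "s > 0" using t tp by (auto simp: s_def)
  define c where "c = (s / t) powr \<theta> / (\<theta> * a t)"
  have c: "c \<ge> 0" unfolding c_def using th a_pos[of t] by simp
  have "(\<integral>\<^sup>+ w. ennreal (if Cau1 w = k \<and> X1 w > z then env t (X1 w) else 0) \<partial>M)
      \<le> ennreal (c * (psi_const * a s))"
  proof (rule nn_integral_le_cmult[OF _ c])
    fix w assume w: "w \<in> space M"
    show "ennreal (if Cau1 w = k \<and> X1 w > z then env t (X1 w) else 0)
        \<le> ennreal c * ennreal (if Cau1 w = k \<and> X1 w \<ge> s then (X1 w / s) powr \<theta> else 0)"
    proof (cases "Cau1 w = k \<and> X1 w > z \<and> X1 w > t")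
      case True
      then have xs: "X1 w > s" by (simp add: s_def)
      have e: "X1 w / t = (s / t) * (X1 w / s)" using s by simp
      have "(X1 w / t) powr \<theta> = ((s / t) * (X1 w / s)) powr \<theta>" by (subst e) (rule refl)
      also have "\<dots> = (s / t) powr \<theta> * (X1 w / s) powr \<theta>"
        using s xs tp by (intro powr_mult; simp)
      finally have "(X1 w / t) powr \<theta> = (s / t) powr \<theta> * (X1 w / s) powr \<theta>" .
      then have "env t (X1 w) = c * (X1 w / s) powr \<theta>"
        using True unfolding env_def c_def by simp
      then show ?thesis using True xs c by (simp add: ennreal_mult[symmetric])
    next
      case False
      then have "(if Cau1 w = k \<and> X1 w > z then env t (X1 w) else 0) = 0"
        unfolding env_def by auto
      then show ?thesis by simp
    qed
  next
    show "(\<lambda>w. ennreal (if Cau1 w = k \<and> X1 w \<ge> s then (X1 w / s) powr \<theta> else 0)) \<in> borel_measurable M"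
      using Xm Caum by measurable
    show "(\<integral>\<^sup>+ w. ennreal (if Cau1 w = k \<and> X1 w \<ge> s then (X1 w / s) powr \<theta> else 0) \<partial>M) \<le> ennreal (psi_const * a s)"
      using tail_moment_X[of \<theta> s] th c5 s unfolding psi_const_def by simp
    show "psi_const * a s \<ge> 0" using psi_const_pos a_pos[of s] by simp
  qed
  also have "c * (psi_const * a s) = psi_env t z"
    unfolding c_def psi_env_def s_def by (simp add: field_simps)
  finally show ?thesis .
qed

lemma abs_psi_le:
  assumes t: "t \<ge> T" and f: "\<And>x. \<bar>f x\<bar> \<le> env t x"
  shows "\<bar>psi M X1 Cau1 k f z\<bar> \<le> psi_env t z"
  unfolding psi_def
proof (rule abs_integral_le_nn_integral[OF _ nn_integral_env_tail_le[OF t] psi_env_nn])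
  fix w assume "w \<in> space M"
  show "\<bar>if Cau1 w = k \<and> z < X1 w then f (X1 w) else 0\<bar> \<le> (if Cau1 w = k \<and> X1 w > z then env t (X1 w) else 0)"
    using f by simp
qed

lemma abs_intFk_le:
  assumes t: "t \<ge> T" and f: "\<And>x. \<bar>f x\<bar> \<le> env t x"
  shows "\<bar>intFk M X1 Cau1 k f\<bar> \<le> psi_const / \<theta>"
proof -
  have tp: "t > 0" using t T by simp
  have "\<bar>intFk M X1 Cau1 k f\<bar> \<le> psi_env t t"
    unfolding intFk_def
  proof (rule abs_integral_le_nn_integral[OF _ nn_integral_env_tail_le[OF t] psi_env_nn])
    fix w assume "w \<in> space M"
    have "\<bar>f x\<bar> \<le> (if x > t then env t x else 0)" for x
      using f[of x] unfolding env_def by (auto split: if_splits)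
    from this[of "X1 w"]
    show "\<bar>if Cau1 w = k then f (X1 w) else 0\<bar> \<le> (if Cau1 w = k \<and> X1 w > t then env t (X1 w) else 0)"
      by (cases "Cau1 w = k") auto
  qed
  then show ?thesis using psi_env_le[OF order_refl tp] by simp
qed

definition intdC_env_ennreal :: "real \<Rightarrow> real \<Rightarrow> ennreal" where
  "intdC_env_ennreal t z = (\<integral>\<^sup>+ w. ennreal (if C1 w \<le> z then psi_env t (C1 w) / (h (C1 w) * b (C1 w)) else 0) \<partial>M)"

definition intdC_env_coeff :: "real \<Rightarrow> real \<Rightarrow> real" where
  "intdC_env_coeff t z = (if z \<le> t then (psi_const / \<theta>) / Fb z else (psi_const / \<theta>) * (z / t) powr \<theta> / a t)"

definition intdC_const :: real where "intdC_const = 4 * 2 powr \<beta> * psi_const / \<theta>"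

definition intdC_env_bound :: "real \<Rightarrow> real \<Rightarrow> real" where
  "intdC_env_bound t z = intdC_const * (if z \<le> t then 1 / h z else (z / t) powr (\<theta> + \<beta>) / (a t * b t))"

lemma intdC_env_coeff_nn: "intdC_env_coeff t z \<ge> 0"
  unfolding intdC_env_coeff_def using psi_const_pos th Fb_pos[of z] a_pos[of t] by simp

lemma intdC_const_pos: "intdC_const > 0" unfolding intdC_const_def using psi_const_pos th by simp

lemma intdC_env_bound_nn: "intdC_env_bound t z \<ge> 0"
  unfolding intdC_env_bound_def using intdC_const_pos h_pos[of z] a_pos[of t] b_pos[of t] by simp

lemma psi_env_div_Fb_le:
  assumes t: "t \<ge> T" and cz: "c \<le> z"
  shows "psi_env t c / Fb c \<le> intdC_env_coeff t z"
proof -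
  have tp: "t > 0" using t T by simp
  have kt: "psi_const / \<theta> > 0" using psi_const_pos th by simp
  show ?thesis
  proof (cases "z \<le> t")
    case True
    then have "c \<le> t" using cz by simp
    then have "psi_env t c / Fb c = (psi_const / \<theta>) / Fb c" using psi_env_le tp by simp
    also have "\<dots> \<le> (psi_const / \<theta>) / Fb z"
      using kt Fb_pos Fb_mono[OF cz] by (intro divide_left_mono) auto
    finally show ?thesis using True by (simp add: intdC_env_coeff_def)
  next
    case False
    have zt1: "(z / t) powr \<theta> \<ge> 1" using False tp th by (simp add: ge_one_powr_ge_zero)
    show ?thesis
    proof (cases "c \<le> t")
      case True
      then have "psi_env t c / Fb c = (psi_const / \<theta>) / Fb c" using psi_env_le tp by simp
      also have "\<dots> \<le> (psi_const / \<theta>) / a t"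
      proof -
        have "a t \<le> Fb c" using a_le_Fb[of t] Fb_mono[OF True] by simp
        then show ?thesis using kt a_pos[of t] by (intro divide_left_mono) auto
      qed
      also have "\<dots> \<le> (psi_const / \<theta>) * (z / t) powr \<theta> / a t"
      proof -
        have "(psi_const / \<theta>) * 1 \<le> (psi_const / \<theta>) * (z / t) powr \<theta>"
          using zt1 kt by (intro mult_left_mono) auto
        from divide_right_mono[OF this, of "a t"] show ?thesis using a_pos[of t] by simp
      qed
      finally show ?thesis using False by (simp add: intdC_env_coeff_def)
    next
      case ct: False
      have "psi_env t c / Fb c = (psi_const / \<theta>) * (c / t) powr \<theta> * (a c / Fb c) / a t"
        unfolding psi_env_def using ct by (simp add: max_def)
      also have "\<dots> \<le> (psi_const / \<theta>) * (z / t) powr \<theta> * 1 / a t"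
      proof -
        have "a c / Fb c \<le> 1" using a_le_Fb[of c] Fb_pos[of c] by simp
        moreover have "(c / t) powr \<theta> \<le> (z / t) powr \<theta>"
          using ct cz tp th by (intro powr_mono2) (auto simp: divide_right_mono)
        moreover have "a c / Fb c \<ge> 0" using a_pos[of c] Fb_pos[of c] by simp
        ultimately show ?thesis using kt a_pos[of t] th psi_const_pos
          by (intro divide_right_mono mult_mono) auto
      qed
      finally show ?thesis using False by (simp add: intdC_env_coeff_def)
    qed
  qed
qed

lemma intdC_env_ennreal_le_bound:
  assumes t: "t \<ge> T"
  shows "intdC_env_ennreal t z \<le> ennreal (intdC_env_bound t z)"
proof -
  have tp: "t > 0" using t T by simp
  have "intdC_env_ennreal t z \<le> ennreal (intdC_env_coeff t z * (2 / (1 - 2 powr (1 - 2)) * b z powr (1 - 2)))"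
    unfolding intdC_env_ennreal_def
  proof (rule nn_integral_le_cmult[OF _ intdC_env_coeff_nn])
    fix w assume w: "w \<in> space M"
    show "ennreal (if C1 w \<le> z then psi_env t (C1 w) / (h (C1 w) * b (C1 w)) else 0)
      \<le> ennreal (intdC_env_coeff t z) * ennreal (if b (C1 w) \<ge> b z then b (C1 w) powr (-2) else 0)"
    proof (cases "C1 w \<le> z")
      case True
      have bb: "b (C1 w) \<ge> b z" using b_mono[OF True] .
      have bp: "b (C1 w) > 0" by (rule b_pos)
      have "psi_env t (C1 w) / (h (C1 w) * b (C1 w)) = (psi_env t (C1 w) / Fb (C1 w)) * b (C1 w) powr (-2)"
        using bp Fb_pos[of "C1 w"] by (simp add: h_eq powr_minus_divide power2_eq_square powr_numeral)
      also have "\<dots> \<le> intdC_env_coeff t z * b (C1 w) powr (-2)"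
        using psi_env_div_Fb_le[OF t True] by (intro mult_right_mono) auto
      finally show ?thesis using True bb intdC_env_coeff_nn by (simp add: ennreal_mult[symmetric] ennreal_leI)
    qed simp
  next
    show "(\<lambda>w. ennreal (if b (C1 w) \<ge> b z then b (C1 w) powr (-2) else 0)) \<in> borel_measurable M"
      using Cm b_meas by measurable
    show "(\<integral>\<^sup>+ w. ennreal (if b (C1 w) \<ge> b z then b (C1 w) powr (-2) else 0) \<partial>M)
      \<le> ennreal (2 / (1 - 2 powr (1 - 2)) * b z powr (1 - 2))"
      using level_moment_C[of 2 z] by simp
    show "0 \<le> 2 / (1 - 2 powr (1 - 2)) * b z powr (1 - 2)" by simp
  qed
  also have "intdC_env_coeff t z * (2 / (1 - 2 powr (1 - 2)) * b z powr (1 - 2)) = 4 * intdC_env_coeff t z / b z"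
    using b_pos[of z] by (simp add: powr_minus_divide)
  also have "4 * intdC_env_coeff t z / b z \<le> intdC_env_bound t z"
  proof (cases "z \<le> t")
    case True
    have "4 * intdC_env_coeff t z / b z = 4 * (psi_const / \<theta>) / h z"
      using True by (simp add: intdC_env_coeff_def h_eq)
    also have "\<dots> \<le> intdC_const / h z"
    proof -
      have g1: "2 powr \<beta> \<ge> 1" by (rule ge_one_powr_ge_zero) (use pos in auto)
      have "1 * (4 * (psi_const / \<theta>)) \<le> 2 powr \<beta> * (4 * (psi_const / \<theta>))"
        using g1 psi_const_pos th by (intro mult_right_mono) auto
      then have "4 * (psi_const / \<theta>) \<le> intdC_const" unfolding intdC_const_def by (simp add: mult_ac)
      from divide_right_mono[OF this, of "h z"] show ?thesis using h_pos[of z] by simp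
    qed
    finally show ?thesis using True by (simp add: intdC_env_bound_def)
  next
    case False
    have bz: "1 / b z \<le> 2 powr \<beta> * (z / t) powr \<beta> * (1 / b t)" using binv_potter[OF t] False by simp
    have "4 * intdC_env_coeff t z / b z = 4 * ((psi_const / \<theta>) * (z / t) powr \<theta> / a t) * (1 / b z)"
      using False by (simp add: intdC_env_coeff_def)
    also have "\<dots> \<le> 4 * ((psi_const / \<theta>) * (z / t) powr \<theta> / a t) * (2 powr \<beta> * (z / t) powr \<beta> * (1 / b t))"
      using bz psi_const_pos th a_pos[of t] by (intro mult_left_mono) auto
    also have "\<dots> = intdC_const * ((z / t) powr (\<theta> + \<beta>) / (a t * b t))"
      unfolding intdC_const_def by (simp add: powr_add field_simps)
    finally show ?thesis using False by (simp add: intdC_env_bound_def)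
  qed
  finally show ?thesis by (simp add: ennreal_leI)
qed

definition intdC_env :: "real \<Rightarrow> real \<Rightarrow> real" where "intdC_env t z = enn2real (intdC_env_ennreal t z)"

lemma intdC_env_ennreal_fin: "t \<ge> T \<Longrightarrow> intdC_env_ennreal t z = ennreal (intdC_env t z)"
  unfolding intdC_env_def using intdC_env_ennreal_le_bound[of t z] by (cases "intdC_env_ennreal t z") (auto simp: top_unique)

lemma intdC_env_nn: "intdC_env t z \<ge> 0" unfolding intdC_env_def by simp

lemma intdC_env_le: "t \<ge> T \<Longrightarrow> intdC_env t z \<le> intdC_env_bound t z"
  using intdC_env_ennreal_le_bound[of t z] intdC_env_ennreal_fin[of t z] intdC_env_bound_nn[of t z] by (simp add: ennreal_le_iff)

lemma intdC_env_ennreal_mono: "z \<le> z' \<Longrightarrow> intdC_env_ennreal t z \<le> intdC_env_ennreal t z'"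
  unfolding intdC_env_ennreal_def
proof (intro nn_integral_mono)
  fix w assume "z \<le> z'"
  moreover have "psi_env t (C1 w) / (h (C1 w) * b (C1 w)) \<ge> 0"
    using psi_env_nn h_pos[of "C1 w"] b_pos[of "C1 w"] by simp
  ultimately show "ennreal (if C1 w \<le> z then psi_env t (C1 w) / (h (C1 w) * b (C1 w)) else 0)
    \<le> ennreal (if C1 w \<le> z' then psi_env t (C1 w) / (h (C1 w) * b (C1 w)) else 0)"
    by (auto intro: ennreal_leI)
qed

lemma intdC_env_meas: "t \<ge> T \<Longrightarrow> intdC_env t \<in> borel_measurable borel"
proof -
  assume t: "t \<ge> T"
  have "mono (intdC_env t)"
  proof (rule monoI)
    fix z z' :: real assume "z \<le> z'"
    then have "ennreal (intdC_env t z) \<le> ennreal (intdC_env t z')" using intdC_env_ennreal_mono intdC_env_ennreal_fin[OF t] by metis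
    then show "intdC_env t z \<le> intdC_env t z'" using intdC_env_nn by (simp add: ennreal_le_iff)
  qed
  then show ?thesis by (rule borel_measurable_mono)
qed

lemma abs_intdC_le:
  assumes t: "t \<ge> T" and f: "\<And>x. \<bar>f x\<bar> \<le> env t x"
  shows "\<bar>intdC M X1 Cau1 C1 K (psi M X1 Cau1 k f) z\<bar> \<le> intdC_env t z"
  unfolding intdC_def
proof (rule abs_integral_le_nn_integral[where G="\<lambda>w. if C1 w \<le> z then psi_env t (C1 w) / (h (C1 w) * b (C1 w)) else 0"])
  fix w assume "w \<in> space M"
  have "\<bar>psi M X1 Cau1 k f (C1 w)\<bar> \<le> psi_env t (C1 w)" by (rule abs_psi_le[OF t f])
  then show "\<bar>if C1 w \<le> z then psi M X1 Cau1 k f (C1 w) / (h (C1 w) * b (C1 w)) else 0\<bar>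
    \<le> (if C1 w \<le> z then psi_env t (C1 w) / (h (C1 w) * b (C1 w)) else 0)"
    using h_pos[of "C1 w"] b_pos[of "C1 w"] by (simp add: abs_div divide_right_mono)
next
  show "(\<integral>\<^sup>+ w. ennreal (if C1 w \<le> z then psi_env t (C1 w) / (h (C1 w) * b (C1 w)) else 0) \<partial>M) \<le> ennreal (intdC_env t z)"
    using intdC_env_ennreal_fin[OF t, of z] unfolding intdC_env_ennreal_def by simp
qed (rule intdC_env_nn)

definition U1_env :: "real \<Rightarrow> real \<Rightarrow> real \<Rightarrow> nat \<Rightarrow> real" where
  "U1_env t x c j = (if x \<le> c \<and> j = k then env t x / b x else 0)"

definition U2_env :: "real \<Rightarrow> real \<Rightarrow> real \<Rightarrow> real" where
  "U2_env t x c = (if c < x then psi_env t c / h c else 0)"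

lemma U1_env_nn: "t > 0 \<Longrightarrow> U1_env t x c j \<ge> 0"
  unfolding U1_env_def using env_nn[of t x] b_pos[of x] by simp

lemma U2_env_nn: "U2_env t x c \<ge> 0"
  unfolding U2_env_def using psi_env_nn[of t c] h_pos[of c] by simp

lemma abs_Ufun_le:
  assumes t: "t \<ge> T" and f: "\<And>x. \<bar>f x\<bar> \<le> env t x"
  shows "\<bar>Ufun M X1 Cau1 C1 K k f x c j\<bar> \<le> U1_env t x c j + U2_env t x c + intdC_env t (min x c)"
proof -
  have k1: "k \<ge> 1" using kK by simp
  have D: "\<bar>intdC M X1 Cau1 C1 K (psi M X1 Cau1 k f) (min x c)\<bar> \<le> intdC_env t (min x c)"
    by (rule abs_intdC_le[OF t f])
  show ?thesis
  proof (cases "x \<le> c")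
    case True
    have "\<bar>(if j = k then f x / b x else 0)\<bar> \<le> U1_env t x c j"
      using True f[of x] b_pos[of x] by (simp add: U1_env_def abs_div divide_right_mono)
    then show ?thesis using True D U2_env_nn[of t x c]
      unfolding Ufun_def Let_def by (simp add: min_def; linarith)
  next
    case False
    have "\<bar>1 / h c * psi M X1 Cau1 k f c\<bar> \<le> U2_env t x c"
      using False abs_psi_le[OF t f, of c] h_pos[of c] by (simp add: U2_env_def abs_mult divide_right_mono)
    moreover have "U1_env t x c j = 0" using False by (simp add: U1_env_def)
    moreover have "Ufun M X1 Cau1 C1 K k f x c j = 1 / h c * psi M X1 Cau1 k f c - intdC M X1 Cau1 C1 K (psi M X1 Cau1 k f) c"
      using False k1 unfolding Ufun_def Let_def by (simp add: min_def)
    moreover have "min x c = c" using False by simp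
    ultimately show ?thesis using D by (simp only:; linarith)
  qed
qed

lemma ln_le_powr: "y > 0 \<Longrightarrow> ln y \<le> y powr \<theta> / \<theta>"
proof -
  assume y: "y > 0"
  have "ln (y powr \<theta>) \<le> y powr \<theta> - 1" using y by (intro ln_le_minus_one) simp
  then have "\<theta> * ln y \<le> y powr \<theta> - 1" using y by (simp add: ln_powr)
  then have "\<theta> * ln y \<le> y powr \<theta>" by simp
  then show ?thesis using th by (simp add: field_simps)
qed

lemma abs_phin_le: "t > 0 \<Longrightarrow> \<bar>phin M X1 Cau1 k t x\<bar> \<le> env t x"
proof -
  assume tp: "t > 0"
  show ?thesis
  proof (cases "x > t")
    case True
    have y: "x / t > 1" using True tp by simp
    have l0: "ln (x / t) \<ge> 0" using y by simp
    have "ln (x / t) \<le> (x / t) powr \<theta> / \<theta>" using y by (intro ln_le_powr) simp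
    from divide_right_mono[OF this, of "a t"]
    have "ln (x / t) / a t \<le> (x / t) powr \<theta> / \<theta> / a t"
      using a_pos[of t] by simp
    then show ?thesis using True l0 a_pos[of t] by (simp add: phin_def env_def)
  next
    case False then show ?thesis by (simp add: phin_def env_def)
  qed
qed

lemma abs_gn_le: "t > 0 \<Longrightarrow> \<bar>gn M X1 Cau1 k t x\<bar> \<le> env t x"
proof -
  assume tp: "t > 0"
  show ?thesis
  proof (cases "x > t")
    case True
    have y: "x / t \<ge> 1" using True tp by simp
    have "(x / t) powr \<theta> \<ge> 1" using y th by (intro ge_one_powr_ge_zero) auto
    then have "\<theta> \<le> (x / t) powr \<theta>" using th by simp
    then have "1 / a t \<le> (x / t) powr \<theta> / (\<theta> * a t)"
      using th a_pos[of t] by (simp add: field_simps)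
    then show ?thesis using True a_pos[of t] by (simp add: gn_def env_def)
  next
    case False then show ?thesis by (simp add: gn_def env_def)
  qed
qed

declare a_meas[measurable] b_meas[measurable] Fb_meas[measurable] h_meas[measurable]

lemma env_meas[measurable]: "env t \<in> borel_measurable borel"
  unfolding env_def by measurable

lemma psi_env_meas[measurable]: "psi_env t \<in> borel_measurable borel"
  unfolding psi_env_def by measurable

definition exp_U1 :: real where "exp_U1 = \<theta> * p + \<beta> * (p - 1)"
definition U1_moment_const :: real where
  "U1_moment_const = 2 powr exp_U1 / (1 - 2 powr exp_U1 * 2 powr (-\<alpha>)) * \<theta> powr (-p) * 2 powr (\<beta> * (p - 1))"

lemma moment_U1_env:
  assumes t: "t \<ge> T"
  shows "(\<integral>\<^sup>+ \<omega>. ennreal (U1_env t (fst (fst \<omega>)) (snd \<omega>) (snd (fst \<omega>)) powr p) \<partial>N)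
    \<le> ennreal (U1_moment_const * (a t * b t) powr (1 - p))"
proof -
  have tp: "t > 0" using t T by simp
  define F where "F x j = (if j = k then (env t x / b x) powr p * b x else 0)" for x j
  have F_nn: "F x j \<ge> 0" for x j unfolding F_def using b_pos[of x] by simp
  have "(\<integral>\<^sup>+ \<omega>. ennreal (U1_env t (fst (fst \<omega>)) (snd \<omega>) (snd (fst \<omega>)) powr p) \<partial>N)
      = (\<integral>\<^sup>+ xj. \<integral>\<^sup>+ c. ennreal (U1_env t (fst xj) c (snd xj) powr p) \<partial>Q \<partial>P1)"
  proof -
    have "(\<integral>\<^sup>+ xj. \<integral>\<^sup>+ c. (\<lambda>\<omega>. ennreal (U1_env t (fst (fst \<omega>)) (snd \<omega>) (snd (fst \<omega>)) powr p)) (xj, c) \<partial>Q \<partial>P1)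
      = integral\<^sup>N N (\<lambda>\<omega>. ennreal (U1_env t (fst (fst \<omega>)) (snd \<omega>) (snd (fst \<omega>)) powr p))"
      by (rule PP.M2.nn_integral_fst) (simp add: U1_env_def)
    then show ?thesis by simp
  qed
  also have "\<dots> \<le> (\<integral>\<^sup>+ xj. ennreal (F (fst xj) (snd xj)) \<partial>P1)"
  proof (rule nn_integral_mono)
    fix xj :: "real \<times> nat"
    obtain x j where xj: "xj = (x, j)" by (cases xj)
    have "(\<lambda>c. ennreal (U1_env t x c j powr p)) = (\<lambda>c. ennreal (if j = k then (env t x / b x) powr p else 0) * indicator {c. x \<le> c} c)"
      by (auto simp: U1_env_def indicator_def)
    then have "(\<integral>\<^sup>+ c. ennreal (U1_env t x c j powr p) \<partial>Q) = ennreal (if j = k then (env t x / b x) powr p else 0) * emeasure Q {c. x \<le> c}"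
      by (simp add: nn_integral_cmult_indicator)
    also have "emeasure Q {c. x \<le> c} = ennreal (b x)"
      by (simp add: emeasure_Q emeasure_eq_measure prob_ge_eq_b)
    finally show "(\<integral>\<^sup>+ c. ennreal (U1_env t (fst xj) c (snd xj) powr p) \<partial>Q) \<le> ennreal (F (fst xj) (snd xj))"
      using xj b_pos[of x] by (simp add: F_def ennreal_mult[symmetric])
  qed
  also have "\<dots> = (\<integral>\<^sup>+ w. ennreal (F (X1 w) (Cau1 w)) \<partial>M)"
    by (subst nn_integral_distr[OF XCau_measurable]) (simp_all add: F_def)
  also have "\<dots> \<le> ennreal ((\<theta> powr (-p) * a t powr (-p) * 2 powr (\<beta> * (p - 1)) * b t powr (1 - p))
        * (2 powr exp_U1 / (1 - 2 powr exp_U1 * 2 powr (-\<alpha>)) * a t))"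
  proof (rule nn_integral_le_cmult)
    fix w assume w: "w \<in> space M"
    show "ennreal (F (X1 w) (Cau1 w)) \<le> ennreal (\<theta> powr (-p) * a t powr (-p) * 2 powr (\<beta> * (p - 1)) * b t powr (1 - p))
       * ennreal (if Cau1 w = k \<and> X1 w \<ge> t then (X1 w / t) powr exp_U1 else 0)"
    proof (cases "Cau1 w = k \<and> X1 w > t")
      case True
      have "F (X1 w) (Cau1 w) \<le> (\<theta> powr (-p) * a t powr (-p) * 2 powr (\<beta> * (p - 1)) * b t powr (1 - p)) * (X1 w / t) powr exp_U1"
      proof -
        have e: "F (X1 w) (Cau1 w) = ((X1 w / t) powr \<theta> / (\<theta> * a t) / b (X1 w)) powr p * b (X1 w)"
          using True by (simp add: F_def env_def)
        show ?thesis unfolding e exp_U1_def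
          by (rule U1_env_powr_bound) (use True tp a_pos b_pos th p2 pos binv_potter[OF t, of "X1 w"] in auto)
      qed
      then show ?thesis using True by (simp add: ennreal_mult[symmetric] ennreal_leI)
    next
      case False
      then have "F (X1 w) (Cau1 w) = 0" by (auto simp: F_def env_def)
      then show ?thesis by simp
    qed
  next
    show "0 \<le> \<theta> powr (-p) * a t powr (-p) * 2 powr (\<beta> * (p - 1)) * b t powr (1 - p)" by simp
    show "(\<lambda>w. ennreal (if Cau1 w = k \<and> X1 w \<ge> t then (X1 w / t) powr exp_U1 else 0)) \<in> borel_measurable M"
      using Xm Caum by measurable
    have "0 \<le> exp_U1" unfolding exp_U1_def using th p2 pos by simp
    moreover have "exp_U1 < \<alpha>" unfolding exp_U1_def using c1 by simp
    ultimately show "(\<integral>\<^sup>+ w. ennreal (if Cau1 w = k \<and> X1 w \<ge> t then (X1 w / t) powr exp_U1 else 0) \<partial>M)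
      \<le> ennreal (2 powr exp_U1 / (1 - 2 powr exp_U1 * 2 powr (-\<alpha>)) * a t)"
      using tail_moment_X[of exp_U1 t] t by simp
    have "2 powr exp_U1 * 2 powr (-\<alpha>) < 1" using c1 unfolding exp_U1_def by (simp add: powr_add[symmetric] powr_less_one)
    then show "0 \<le> 2 powr exp_U1 / (1 - 2 powr exp_U1 * 2 powr (-\<alpha>)) * a t" using a_pos[of t] by simp
  qed
  also have "(\<theta> powr (-p) * a t powr (-p) * 2 powr (\<beta> * (p - 1)) * b t powr (1 - p))
        * (2 powr exp_U1 / (1 - 2 powr exp_U1 * 2 powr (-\<alpha>)) * a t) = U1_moment_const * (a t * b t) powr (1 - p)"
    using a_pos[of t] b_pos[of t] unfolding U1_moment_const_def
    by (simp add: powr_mult powr_diff powr_minus_divide field_simps)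
  finally show ?thesis .
qed

lemma sets_fst_gt: "{xj::real\<times>nat. c < fst xj} \<in> sets (borel \<Otimes>\<^sub>M count_space UNIV)"
proof -
  have "{xj::real\<times>nat. c < fst xj} = {xj \<in> space (borel \<Otimes>\<^sub>M count_space UNIV). c < fst xj}"
    by (simp add: space_pair_measure)
  also have "\<dots> \<in> sets (borel \<Otimes>\<^sub>M count_space UNIV)" by measurable
  finally show ?thesis .
qed

definition exp_U2 :: real where "exp_U2 = max (\<theta> * p - \<alpha> + \<beta> * p) 0"
definition tail_const_C :: "real \<Rightarrow> real" where "tail_const_C l = 2 powr l / (1 - 2 powr l * 2 powr (-\<beta>'))"
definition level_const :: "real \<Rightarrow> real" where "level_const q = 2 / (1 - 2 powr (1 - q))"
definition U2_moment_const :: real where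
  "U2_moment_const = (psi_const / \<theta>) powr p * (level_const p + 2 powr \<alpha> * 2 powr (\<beta> * p) * tail_const_C exp_U2)"

lemma tail_const_C_pos: "l < \<beta>' \<Longrightarrow> tail_const_C l > 0"
  unfolding tail_const_C_def by (simp add: powr_add[symmetric] powr_less_one)

lemma level_const_pos: "q > 1 \<Longrightarrow> level_const q > 0"
  unfolding level_const_def by (simp add: powr_less_one)

lemma moment_U2_env:
  assumes t: "t \<ge> T"
  shows "(\<integral>\<^sup>+ \<omega>. ennreal (U2_env t (fst (fst \<omega>)) (snd \<omega>) powr p) \<partial>N)
    \<le> ennreal (U2_moment_const * (a t * b t) powr (1 - p))"
proof -
  have tp: "t > 0" using t T by simp
  define G where "G c = (psi_env t c / h c) powr p * Fb c" for c
  define ca where "ca = (psi_const / \<theta>) powr p * Fb t powr (1 - p)"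
  define cb where "cb = (psi_const / \<theta>) powr p * 2 powr \<alpha> * 2 powr (\<beta> * p) * a t powr (1 - p) * b t powr (-p)"
  have exp_U2: "0 \<le> exp_U2" "exp_U2 < \<beta>'" using c2 by (auto simp: exp_U2_def)
  have "(\<integral>\<^sup>+ \<omega>. ennreal (U2_env t (fst (fst \<omega>)) (snd \<omega>) powr p) \<partial>N)
      = (\<integral>\<^sup>+ c. \<integral>\<^sup>+ xj. ennreal (U2_env t (fst xj) c powr p) \<partial>P1 \<partial>Q)"
  proof -
    have "(\<integral>\<^sup>+ c. \<integral>\<^sup>+ xj. (\<lambda>\<omega>. ennreal (U2_env t (fst (fst \<omega>)) (snd \<omega>) powr p)) (xj, c) \<partial>P1 \<partial>Q)
      = integral\<^sup>N N (\<lambda>\<omega>. ennreal (U2_env t (fst (fst \<omega>)) (snd \<omega>) powr p))"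
      by (rule PP.nn_integral_snd) (simp add: U2_env_def)
    then show ?thesis by simp
  qed
  also have "\<dots> = (\<integral>\<^sup>+ c. ennreal (G c) \<partial>Q)"
  proof (rule nn_integral_cong)
    fix c :: real
    have "(\<integral>\<^sup>+ xj. ennreal (U2_env t (fst xj) c powr p) \<partial>P1)
       = (\<integral>\<^sup>+ xj. ennreal ((psi_env t c / h c) powr p) * indicator {xj. c < fst xj} xj \<partial>P1)"
      by (rule nn_integral_cong) (simp add: U2_env_def indicator_def)
    also have "\<dots> = ennreal ((psi_env t c / h c) powr p) * emeasure P1 {xj. c < fst xj}"
      by (rule nn_integral_cmult_indicator) (simp add: sets_fst_gt)
    also have "emeasure P1 {xj. c < fst xj} = ennreal (Fb c)"
      using sets_fst_gt by (simp add: emeasure_P1 emeasure_eq_measure Fb_eq_prob_gt)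
    finally show "(\<integral>\<^sup>+ xj. ennreal (U2_env t (fst xj) c powr p) \<partial>P1) = ennreal (G c)"
      using Fb_pos[of c] by (simp add: G_def ennreal_mult[symmetric])
  qed
  also have "\<dots> = (\<integral>\<^sup>+ w. ennreal (G (C1 w)) \<partial>M)"
    by (subst nn_integral_distr[OF Cm]) (simp_all add: G_def)
  also have "\<dots> \<le> (\<integral>\<^sup>+ w. ennreal ca * ennreal (if b (C1 w) \<ge> b t then b (C1 w) powr (-p) else 0)
      + ennreal cb * ennreal (if C1 w \<ge> t then (C1 w / t) powr exp_U2 else 0) \<partial>M)"
  proof (rule nn_integral_mono)
    fix w assume w: "w \<in> space M"
    have ca0: "ca \<ge> 0" "cb \<ge> 0" unfolding ca_def cb_def by simp_all
    have key: "ennreal (G c) \<le> ennreal ca * ennreal (if b c \<ge> b t then b c powr (-p) else 0)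
      + ennreal cb * ennreal (if c \<ge> t then (c / t) powr exp_U2 else 0)" for c
    proof (cases "c \<le> t")
      case True
      have "G c = (psi_const / \<theta> / (Fb c * b c)) powr p * Fb c"
        unfolding G_def using psi_env_le[OF True tp] by (simp add: h_eq)
      also have "\<dots> \<le> ca * b c powr (-p)" unfolding ca_def
        by (rule U2_env_powr_bound_below) (use psi_const_pos th Fb_pos b_pos Fb_mono[OF True] p2 in auto)
      finally have "ennreal (G c) \<le> ennreal ca * ennreal (b c powr (-p))"
        using ca0 by (simp add: ennreal_mult[symmetric] ennreal_leI)
      also have "\<dots> \<le> ennreal ca * ennreal (if b c \<ge> b t then b c powr (-p) else 0)"
        using b_mono[OF True] by simp
      finally show ?thesis by (simp add: add_increasing2)
    next
      case False
      have "G c = (psi_const / \<theta> * (c / t) powr \<theta> * a c / a t / (Fb c * b c)) powr p * Fb c"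
        unfolding G_def psi_env_def using False by (simp add: h_eq max_def)
      also have "\<dots> \<le> cb * (c / t) powr exp_U2" unfolding cb_def
        by (rule U2_env_powr_bound_above) (use psi_const_pos th a_pos b_pos a_le_Fb False tp p2 pos a_potter[OF t, of c]
              binv_potter[OF t, of c] in \<open>auto simp: exp_U2_def\<close>)
      finally have "ennreal (G c) \<le> ennreal cb * ennreal ((c / t) powr exp_U2)"
        using ca0 by (simp add: ennreal_mult[symmetric] ennreal_leI)
      also have "\<dots> \<le> ennreal cb * ennreal (if c \<ge> t then (c / t) powr exp_U2 else 0)"
        using False by simp
      finally show ?thesis by (simp add: add_increasing)
    qed
    show "ennreal (G (C1 w)) \<le> ennreal ca * ennreal (if b (C1 w) \<ge> b t then b (C1 w) powr (-p) else 0)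
      + ennreal cb * ennreal (if C1 w \<ge> t then (C1 w / t) powr exp_U2 else 0)"
      by (rule key)
  qed
  also have "\<dots> \<le> ennreal ca * ennreal (level_const p * b t powr (1 - p)) + ennreal cb * ennreal (tail_const_C exp_U2 * b t)"
    unfolding level_const_def tail_const_C_def
    by (intro nn_integral_cmult_add_le) (measurable, measurable, use level_moment_C[of p t] tail_moment_C[of exp_U2 t] exp_U2 t p2 in auto)
  also have "\<dots> = ennreal (ca * (level_const p * b t powr (1 - p)) + cb * (tail_const_C exp_U2 * b t))"
    using level_const_pos[of p] tail_const_C_pos[OF exp_U2(2)] p2 b_pos[of t] unfolding ca_def cb_def
    by (simp add: ennreal_mult[symmetric] ennreal_plus[symmetric] del: ennreal_plus)
  also have "\<dots> \<le> ennreal (U2_moment_const * (a t * b t) powr (1 - p))"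
  proof (rule ennreal_leI)
    have "Fb t powr (1 - p) \<le> a t powr (1 - p)"
      using a_pos[of t] a_le_Fb[of t] p2 by (intro powr_mono2') auto
    then have "ca \<le> (psi_const / \<theta>) powr p * a t powr (1 - p)" unfolding ca_def
      by (intro mult_left_mono) auto
    then have "ca * (level_const p * b t powr (1 - p)) \<le> (psi_const / \<theta>) powr p * a t powr (1 - p) * (level_const p * b t powr (1 - p))"
      using level_const_pos[of p] p2 by (intro mult_right_mono) auto
    also have "\<dots> = (psi_const / \<theta>) powr p * level_const p * (a t * b t) powr (1 - p)"
      using a_pos[of t] b_pos[of t] by (simp add: powr_mult)
    finally have 1: "ca * (level_const p * b t powr (1 - p)) \<le> (psi_const / \<theta>) powr p * level_const p * (a t * b t) powr (1 - p)" .
    have 2: "cb * (tail_const_C exp_U2 * b t) = (psi_const / \<theta>) powr p * 2 powr \<alpha> * 2 powr (\<beta> * p) * tail_const_C exp_U2 * (a t * b t) powr (1 - p)"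
      unfolding cb_def using a_pos[of t] b_pos[of t]
      by (simp add: powr_def ln_mult exp_diff exp_add exp_minus field_simps)
    show "ca * (level_const p * b t powr (1 - p)) + cb * (tail_const_C exp_U2 * b t) \<le> U2_moment_const * (a t * b t) powr (1 - p)"
    proof -
      have "U2_moment_const * (a t * b t) powr (1 - p) = (psi_const / \<theta>) powr p * level_const p * (a t * b t) powr (1 - p)
         + (psi_const / \<theta>) powr p * 2 powr \<alpha> * 2 powr (\<beta> * p) * tail_const_C exp_U2 * (a t * b t) powr (1 - p)"
        unfolding U2_moment_const_def by (simp add: algebra_simps)
      then show ?thesis using 1 2 by linarith
    qed
  qed
  finally show ?thesis .
qed

definition dC_env :: "real \<Rightarrow> real \<Rightarrow> real" where "dC_env t c = psi_env t c / (h c * b c)"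

lemma dC_env_nn: "dC_env t c \<ge> 0" unfolding dC_env_def using psi_env_nn[of t c] h_pos[of c] b_pos[of c] by simp

lemma dC_env_meas[measurable]: "dC_env t \<in> borel_measurable borel" unfolding dC_env_def by measurable

lemma intdC_env_bound_meas[measurable]: "intdC_env_bound t \<in> borel_measurable borel" unfolding intdC_env_bound_def by measurable

definition exp_intdC :: real where "exp_intdC = (\<theta> + \<beta>) * (p - 1)"

lemma intdC_env_bound_powr_below: "z \<le> t \<Longrightarrow> intdC_env_bound t z powr (p - 1) = intdC_const powr (p - 1) * h z powr (-(p - 1))"
  unfolding intdC_env_bound_def using intdC_const_pos h_pos[of z]
  by (simp add: powr_def ln_div exp_diff exp_add exp_minus field_simps)

lemma intdC_env_bound_powr_above: "z > t \<Longrightarrow> t > 0 \<Longrightarrow> intdC_env_bound t z powr (p - 1) = intdC_const powr (p - 1) * (a t * b t) powr (1 - p) * (z / t) powr exp_intdC"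
  unfolding intdC_env_bound_def exp_intdC_def using intdC_const_pos a_pos[of t] b_pos[of t]
  by (simp add: powr_def ln_div ln_mult exp_diff exp_add exp_minus field_simps)

lemma intdC_env_powr_le:
  assumes t: "t \<ge> T"
  shows "ennreal (intdC_env t z powr p) \<le> (\<integral>\<^sup>+ c. ennreal (if c \<le> z then intdC_env_bound t z powr (p - 1) * dC_env t c else 0) \<partial>Q)"
proof -
  have "intdC_env t z powr p \<le> intdC_env_bound t z powr (p - 1) * intdC_env t z"
  proof (cases "intdC_env t z = 0")
    case True then show ?thesis by simp
  next
    case False
    then have dp: "intdC_env t z > 0" using intdC_env_nn[of t z] by simp
    have "intdC_env t z powr p = intdC_env t z powr (p - 1) * intdC_env t z"
      using powr_mult_base[of "intdC_env t z" "p - 1"] dp by (simp add: mult.commute)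
    also have "\<dots> \<le> intdC_env_bound t z powr (p - 1) * intdC_env t z"
      using dp intdC_env_le[OF t, of z] p2 by (intro mult_right_mono powr_mono2) auto
    finally show ?thesis .
  qed
  then have "ennreal (intdC_env t z powr p) \<le> ennreal (intdC_env_bound t z powr (p - 1)) * ennreal (intdC_env t z)"
    using intdC_env_nn[of t z] by (simp add: ennreal_mult[symmetric] ennreal_leI)
  also have "ennreal (intdC_env t z) = (\<integral>\<^sup>+ w. ennreal (if C1 w \<le> z then dC_env t (C1 w) else 0) \<partial>M)"
    using intdC_env_ennreal_fin[OF t, of z] unfolding intdC_env_ennreal_def dC_env_def by simp
  also have "ennreal (intdC_env_bound t z powr (p - 1)) * \<dots> = (\<integral>\<^sup>+ w. ennreal (intdC_env_bound t z powr (p - 1)) * ennreal (if C1 w \<le> z then dC_env t (C1 w) else 0) \<partial>M)"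
    by (rule nn_integral_cmult[symmetric]) (use Cm in measurable)
  also have "\<dots> = (\<integral>\<^sup>+ w. ennreal (if C1 w \<le> z then intdC_env_bound t z powr (p - 1) * dC_env t (C1 w) else 0) \<partial>M)"
    by (rule nn_integral_cong) (simp add: ennreal_mult[symmetric] dC_env_nn)
  also have "\<dots> = (\<integral>\<^sup>+ c. ennreal (if c \<le> z then intdC_env_bound t z powr (p - 1) * dC_env t c else 0) \<partial>Q)"
    by (subst nn_integral_distr[OF Cm]) simp_all
  finally show ?thesis .
qed

definition tail_const_Z :: "real \<Rightarrow> real" where "tail_const_Z l = 2 powr l / (1 - 2 powr l * 2 powr (-(\<beta>' + \<eta>)))"

definition Z_moment_bound :: "real \<Rightarrow> real \<Rightarrow> real" where
  "Z_moment_bound t c = intdC_const powr (p - 1) * (a t * b t) powr (1 - p) *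
     (if c \<le> t then (level_const (p - 1) + tail_const_Z exp_intdC) * h t else tail_const_Z exp_intdC * (c / t) powr exp_intdC * h c)"

lemma exp_intdC_bounds: "0 \<le> exp_intdC" "exp_intdC < \<beta>' + \<eta>"
  using c3 th pos p2 unfolding exp_intdC_def by auto

lemma tail_const_Z_pos: "tail_const_Z exp_intdC > 0"
  using exp_intdC_bounds unfolding tail_const_Z_def by (simp add: powr_add[symmetric] powr_less_one)

lemma nn_integral_intdC_env_bound_Z:
  assumes t: "t \<ge> T"
  shows "(\<integral>\<^sup>+ \<omega>. ennreal (if c' \<le> min (fst (fst \<omega>)) (snd \<omega>) then intdC_env_bound t (min (fst (fst \<omega>)) (snd \<omega>)) powr (p - 1) else 0) \<partial>N)
     \<le> ennreal (Z_moment_bound t c')"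
proof -
  have tp: "t > 0" using t T by simp
  define Z where "Z \<omega> = min (fst (fst \<omega>)) (snd (\<omega>::(real\<times>nat)\<times>real))" for \<omega>
  have Zm': "Z \<in> borel_measurable N" unfolding Z_def by (rule Z_measurable)
  define kk where "kk = intdC_const powr (p - 1)"
  define AB where "AB = (a t * b t) powr (1 - p)"
  have kk: "kk > 0" unfolding kk_def using intdC_const_pos by simp
  have AB: "AB > 0" unfolding AB_def using a_pos[of t] b_pos[of t] by simp
  show ?thesis
  proof (cases "c' \<le> t")
    case True
    have "(\<integral>\<^sup>+ \<omega>. ennreal (if c' \<le> Z \<omega> then intdC_env_bound t (Z \<omega>) powr (p - 1) else 0) \<partial>N)
      \<le> (\<integral>\<^sup>+ \<omega>. ennreal kk * ennreal (if h (Z \<omega>) \<ge> h t then h (Z \<omega>) powr (-(p - 1)) else 0)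
          + ennreal (kk * AB) * ennreal (if Z \<omega> \<ge> t then (Z \<omega> / t) powr exp_intdC else 0) \<partial>N)"
    proof (rule nn_integral_mono)
      fix \<omega>
      show "ennreal (if c' \<le> Z \<omega> then intdC_env_bound t (Z \<omega>) powr (p - 1) else 0)
        \<le> ennreal kk * ennreal (if h (Z \<omega>) \<ge> h t then h (Z \<omega>) powr (-(p - 1)) else 0)
          + ennreal (kk * AB) * ennreal (if Z \<omega> \<ge> t then (Z \<omega> / t) powr exp_intdC else 0)"
      proof (cases "Z \<omega> \<le> t")
        case True
        then have "intdC_env_bound t (Z \<omega>) powr (p - 1) = kk * h (Z \<omega>) powr (-(p - 1))" using intdC_env_bound_powr_below kk_def by simp
        moreover have "h (Z \<omega>) \<ge> h t" using h_mono[OF True] .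
        ultimately show ?thesis using kk by (auto simp: ennreal_mult[symmetric] intro!: add_increasing2)
      next
        case False
        then have "intdC_env_bound t (Z \<omega>) powr (p - 1) = kk * AB * (Z \<omega> / t) powr exp_intdC" using intdC_env_bound_powr_above tp kk_def AB_def by simp
        then show ?thesis using False kk AB by (auto simp: ennreal_mult[symmetric] intro!: add_increasing)
      qed
    qed
    also have "\<dots> \<le> ennreal kk * ennreal (level_const (p - 1) * h t powr (1 - (p - 1))) + ennreal (kk * AB) * ennreal (tail_const_Z exp_intdC * h t)"
      unfolding level_const_def tail_const_Z_def Z_def
      by (intro nn_integral_cmult_add_le) (measurable, measurable, use level_moment_Z[of "p - 1" t] tail_moment_Z[of exp_intdC t] exp_intdC_bounds t p2 in auto)
    also have "\<dots> \<le> ennreal (Z_moment_bound t c')"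
    proof -
      have "h t powr (1 - (p - 1)) = h t * h t powr (1 - p)"
        using powr_mult_base[of "h t" "1 - p"] h_pos[of t] by simp
      also have "\<dots> \<le> h t * AB" unfolding AB_def
        using h_pos[of t] ab_le_h[of t] a_pos[of t] b_pos[of t] p2 by (intro mult_left_mono powr_mono2') auto
      finally have hh: "h t powr (1 - (p - 1)) \<le> h t * AB" .
      have "kk * (level_const (p - 1) * h t powr (1 - (p - 1))) \<le> kk * (level_const (p - 1) * (h t * AB))"
        using hh kk level_const_pos[of "p - 1"] p2 by (intro mult_left_mono) auto
      then have "kk * (level_const (p - 1) * h t powr (1 - (p - 1))) + kk * AB * (tail_const_Z exp_intdC * h t) \<le> Z_moment_bound t c'"
        unfolding Z_moment_bound_def kk_def[symmetric] AB_def[symmetric] using True by (simp add: algebra_simps)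
      moreover have "level_const (p - 1) * h t powr (1 - (p - 1)) \<ge> 0" using level_const_pos[of "p - 1"] p2 by simp
      ultimately show ?thesis using kk AB tail_const_Z_pos h_pos[of t]
        by (simp add: ennreal_mult[symmetric] ennreal_plus[symmetric] ennreal_leI del: ennreal_plus)
    qed
    finally show ?thesis unfolding Z_def .
  next
    case False
    have cT: "c' \<ge> T" using False t by simp
    have cp: "c' > 0" using False tp by simp
    have "(\<integral>\<^sup>+ \<omega>. ennreal (if c' \<le> Z \<omega> then intdC_env_bound t (Z \<omega>) powr (p - 1) else 0) \<partial>N)
      \<le> (\<integral>\<^sup>+ \<omega>. ennreal (kk * AB * (c' / t) powr exp_intdC) * ennreal (if Z \<omega> \<ge> c' then (Z \<omega> / c') powr exp_intdC else 0) \<partial>N)"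
    proof (rule nn_integral_mono)
      fix \<omega>
      show "ennreal (if c' \<le> Z \<omega> then intdC_env_bound t (Z \<omega>) powr (p - 1) else 0)
        \<le> ennreal (kk * AB * (c' / t) powr exp_intdC) * ennreal (if Z \<omega> \<ge> c' then (Z \<omega> / c') powr exp_intdC else 0)"
      proof (cases "c' \<le> Z \<omega>")
        case True
        then have zt: "Z \<omega> > t" using False by simp
        have "intdC_env_bound t (Z \<omega>) powr (p - 1) = kk * AB * (Z \<omega> / t) powr exp_intdC" using intdC_env_bound_powr_above[OF zt tp] kk_def AB_def by simp
        also have "(Z \<omega> / t) powr exp_intdC = (c' / t) powr exp_intdC * (Z \<omega> / c') powr exp_intdC"
          using cp tp zt by (simp add: powr_def ln_div exp_add[symmetric] algebra_simps)
        finally show ?thesis using True kk AB by (simp add: ennreal_mult[symmetric] mult_ac)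
      qed simp
    qed
    also have "\<dots> = ennreal (kk * AB * (c' / t) powr exp_intdC) * (\<integral>\<^sup>+ \<omega>. ennreal (if Z \<omega> \<ge> c' then (Z \<omega> / c') powr exp_intdC else 0) \<partial>N)"
      by (rule nn_integral_cmult) (use Zm' in measurable)
    also have "\<dots> \<le> ennreal (kk * AB * (c' / t) powr exp_intdC) * ennreal (tail_const_Z exp_intdC * h c')"
      using tail_moment_Z[of exp_intdC c'] exp_intdC_bounds cT unfolding tail_const_Z_def Z_def by (intro mult_left_mono) auto
    also have "\<dots> = ennreal (Z_moment_bound t c')"
      unfolding Z_moment_bound_def kk_def[symmetric] AB_def[symmetric] using False kk AB tail_const_Z_pos h_pos[of c']
      by (simp add: ennreal_mult[symmetric] algebra_simps)
    finally show ?thesis unfolding Z_def .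
  qed
qed

definition exp_dC :: real where "exp_dC = max (\<theta> - \<alpha> + exp_intdC + \<beta>) 0"

definition intdC_moment_const :: real where
  "intdC_moment_const = intdC_const powr (p - 1) * (psi_const / \<theta>) * ((level_const (p - 1) + tail_const_Z exp_intdC) * level_const 2 + tail_const_Z exp_intdC * 2 powr \<alpha> * 2 powr \<beta> * tail_const_C exp_dC)"

lemma exp_dC_bounds: "0 \<le> exp_dC" "exp_dC < \<beta>'"
  using c4 unfolding exp_dC_def exp_intdC_def by auto

lemma nn_integral_dC_env_Z_moment_bound:
  assumes t: "t \<ge> T"
  shows "(\<integral>\<^sup>+ c. ennreal (dC_env t c * Z_moment_bound t c) \<partial>Q) \<le> ennreal (intdC_moment_const * (a t * b t) powr (1 - p))"
proof -
  have tp: "t > 0" using t T by simp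
  define kk where "kk = intdC_const powr (p - 1)"
  define AB where "AB = (a t * b t) powr (1 - p)"
  have kk: "kk > 0" unfolding kk_def using intdC_const_pos by simp
  have AB: "AB > 0" unfolding AB_def using a_pos[of t] b_pos[of t] by simp
  have P: "psi_const / \<theta> > 0" using psi_const_pos th by simp
  define E1 where "E1 = (psi_const / \<theta>) * kk * AB * (level_const (p - 1) + tail_const_Z exp_intdC) * b t"
  define E2 where "E2 = kk * AB * tail_const_Z exp_intdC * ((psi_const / \<theta>) * 2 powr \<alpha> * 2 powr \<beta> / b t)"
  have E1: "E1 \<ge> 0" unfolding E1_def using psi_const_pos th kk AB level_const_pos[of "p - 1"] tail_const_Z_pos b_pos[of t] p2 by simp
  have E2: "E2 \<ge> 0" unfolding E2_def using psi_const_pos th kk AB tail_const_Z_pos b_pos[of t] by simp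
  have "(\<integral>\<^sup>+ c. ennreal (dC_env t c * Z_moment_bound t c) \<partial>Q) = (\<integral>\<^sup>+ w. ennreal (dC_env t (C1 w) * Z_moment_bound t (C1 w)) \<partial>M)"
    by (subst nn_integral_distr[OF Cm]) (simp_all add: Z_moment_bound_def)
  also have "\<dots> \<le> (\<integral>\<^sup>+ w. ennreal E1 * ennreal (if b (C1 w) \<ge> b t then b (C1 w) powr (-2) else 0)
      + ennreal E2 * ennreal (if C1 w \<ge> t then (C1 w / t) powr exp_dC else 0) \<partial>M)"
  proof (rule nn_integral_mono)
    fix w
    have key: "ennreal (dC_env t c * Z_moment_bound t c) \<le> ennreal E1 * ennreal (if b c \<ge> b t then b c powr (-2) else 0)
      + ennreal E2 * ennreal (if c \<ge> t then (c / t) powr exp_dC else 0)" for c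
    proof (cases "c \<le> t")
      case True
      have "dC_env t c * Z_moment_bound t c = (psi_const / \<theta>) * kk * AB * (level_const (p - 1) + tail_const_Z exp_intdC) * (Fb t / Fb c) * b t * b c powr (-2)"
        unfolding dC_env_def Z_moment_bound_def kk_def[symmetric] AB_def[symmetric] using True psi_env_le[OF True tp] b_pos[of c] Fb_pos[of c]
        by (simp add: h_eq powr_minus_divide power2_eq_square powr_numeral field_simps)
      also have "\<dots> \<le> (psi_const / \<theta>) * kk * AB * (level_const (p - 1) + tail_const_Z exp_intdC) * 1 * b t * b c powr (-2)"
      proof -
        have "Fb t / Fb c \<le> 1" using Fb_mono[OF True] Fb_pos[of c] by simp
        then show ?thesis using P psi_const_pos th kk AB level_const_pos[of "p - 1"] tail_const_Z_pos b_pos[of t] p2 Fb_pos[of t] Fb_pos[of c]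
          by (intro mult_right_mono mult_left_mono) auto
      qed
      also have "\<dots> = E1 * b c powr (-2)" unfolding E1_def by simp
      finally have "ennreal (dC_env t c * Z_moment_bound t c) \<le> ennreal E1 * ennreal (b c powr (-2))"
        using E1 by (simp add: ennreal_mult[symmetric] ennreal_leI)
      then show ?thesis using b_mono[OF True] by (simp add: add_increasing2)
    next
      case False
      have "dC_env t c * Z_moment_bound t c = kk * AB * tail_const_Z exp_intdC * ((c / t) powr exp_intdC * (psi_const / \<theta> * (c / t) powr \<theta> * a c / a t) / b c)"
        unfolding dC_env_def Z_moment_bound_def kk_def[symmetric] AB_def[symmetric] psi_env_def using False h_pos[of c] b_pos[of c]
        by (simp add: max_def field_simps)
      also have "\<dots> \<le> kk * AB * tail_const_Z exp_intdC * (((psi_const / \<theta>) * 2 powr \<alpha> * 2 powr \<beta> / b t) * (c / t) powr exp_dC)"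
        using kk AB tail_const_Z_pos
        by (intro mult_left_mono dC_env_bound_above) (use P a_pos b_pos tp False a_potter[OF t, of c] binv_potter[OF t, of c] in \<open>auto simp: exp_dC_def\<close>)
      also have "\<dots> = E2 * (c / t) powr exp_dC" unfolding E2_def by simp
      finally have "ennreal (dC_env t c * Z_moment_bound t c) \<le> ennreal E2 * ennreal ((c / t) powr exp_dC)"
        using E2 by (simp add: ennreal_mult[symmetric] ennreal_leI)
      then show ?thesis using False by (simp add: add_increasing)
    qed
    show "ennreal (dC_env t (C1 w) * Z_moment_bound t (C1 w)) \<le> ennreal E1 * ennreal (if b (C1 w) \<ge> b t then b (C1 w) powr (-2) else 0)
      + ennreal E2 * ennreal (if C1 w \<ge> t then (C1 w / t) powr exp_dC else 0)" by (rule key)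
  qed
  also have "\<dots> \<le> ennreal E1 * ennreal (level_const 2 * b t powr (1 - 2)) + ennreal E2 * ennreal (tail_const_C exp_dC * b t)"
    unfolding level_const_def tail_const_C_def
    by (intro nn_integral_cmult_add_le) (measurable, measurable, use level_moment_C[of 2 t] tail_moment_C[of exp_dC t] exp_dC_bounds t in auto)
  also have "\<dots> = ennreal (intdC_moment_const * (a t * b t) powr (1 - p))"
  proof -
    have "E1 * (level_const 2 * b t powr (1 - 2)) + E2 * (tail_const_C exp_dC * b t) = intdC_moment_const * AB"
      unfolding E1_def E2_def intdC_moment_const_def kk_def using b_pos[of t] th
      by (simp add: powr_minus_divide field_simps)
    moreover have "level_const 2 * b t powr (1 - 2) \<ge> 0" using level_const_pos[of 2] by simp
    moreover have "tail_const_C exp_dC * b t \<ge> 0" using tail_const_C_pos[OF exp_dC_bounds(2)] b_pos[of t] by simp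
    ultimately show ?thesis using E1 E2 unfolding AB_def
      by (simp only: ennreal_mult[symmetric] ennreal_plus[symmetric] mult_nonneg_nonneg)
  qed
  finally show ?thesis .
qed

lemma pair_sigma_finite_N_Q: "pair_sigma_finite N Q"
  by (simp add: pair_sigma_finite_def N_prob Q_prob prob_space_imp_sigma_finite)

lemma moment_intdC_env:
  assumes t: "t \<ge> T"
  shows "(\<integral>\<^sup>+ \<omega>. ennreal (intdC_env t (min (fst (fst \<omega>)) (snd \<omega>)) powr p) \<partial>N)
    \<le> ennreal (intdC_moment_const * (a t * b t) powr (1 - p))"
proof -
  interpret pair_sigma_finite_N_Q: pair_sigma_finite N Q by (rule pair_sigma_finite_N_Q)
  define f where "f \<omega> c = ennreal (if c \<le> min (fst (fst \<omega>)) (snd \<omega>) then intdC_env_bound t (min (fst (fst \<omega>)) (snd \<omega>)) powr (p - 1) * dC_env t c else 0)"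
    for \<omega> :: "(real \<times> nat) \<times> real" and c :: real
  have fm: "case_prod f \<in> borel_measurable (N \<Otimes>\<^sub>M Q)" unfolding f_def by measurable
  have "(\<integral>\<^sup>+ \<omega>. ennreal (intdC_env t (min (fst (fst \<omega>)) (snd \<omega>)) powr p) \<partial>N) \<le> (\<integral>\<^sup>+ \<omega>. \<integral>\<^sup>+ c. f \<omega> c \<partial>Q \<partial>N)"
    unfolding f_def by (intro nn_integral_mono intdC_env_powr_le[OF t])
  also have "\<dots> = (\<integral>\<^sup>+ c. \<integral>\<^sup>+ \<omega>. f \<omega> c \<partial>N \<partial>Q)"
    by (rule pair_sigma_finite_N_Q.Fubini'[OF fm, symmetric])
  also have "\<dots> \<le> (\<integral>\<^sup>+ c. ennreal (dC_env t c * Z_moment_bound t c) \<partial>Q)"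
  proof (rule nn_integral_mono)
    fix c
    have "(\<integral>\<^sup>+ \<omega>. f \<omega> c \<partial>N) = (\<integral>\<^sup>+ \<omega>. ennreal (dC_env t c) * ennreal (if c \<le> min (fst (fst \<omega>)) (snd \<omega>) then intdC_env_bound t (min (fst (fst \<omega>)) (snd \<omega>)) powr (p - 1) else 0) \<partial>N)"
      unfolding f_def by (rule nn_integral_cong) (simp add: ennreal_mult[symmetric] dC_env_nn mult.commute)
    also have "\<dots> = ennreal (dC_env t c) * (\<integral>\<^sup>+ \<omega>. ennreal (if c \<le> min (fst (fst \<omega>)) (snd \<omega>) then intdC_env_bound t (min (fst (fst \<omega>)) (snd \<omega>)) powr (p - 1) else 0) \<partial>N)"
      by (rule nn_integral_cmult) measurable
    also have "\<dots> \<le> ennreal (dC_env t c) * ennreal (Z_moment_bound t c)"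
      by (intro mult_left_mono nn_integral_intdC_env_bound_Z[OF t]) simp
    also have "\<dots> = ennreal (dC_env t c * Z_moment_bound t c)"
      by (rule ennreal_mult'[symmetric]) (rule dC_env_nn)
    finally show "(\<integral>\<^sup>+ \<omega>. f \<omega> c \<partial>N) \<le> ennreal (dC_env t c * Z_moment_bound t c)" .
  qed
  also have "\<dots> \<le> ennreal (intdC_moment_const * (a t * b t) powr (1 - p))" by (rule nn_integral_dC_env_Z_moment_bound[OF t])
  finally show ?thesis .
qed

definition W :: "real \<Rightarrow> real \<Rightarrow> real \<Rightarrow> real \<Rightarrow> nat \<Rightarrow> real" where
  "W t \<gamma> x c j = (Ufun M X1 Cau1 C1 K k (phin M X1 Cau1 k t) x c j - intFk M X1 Cau1 k (phin M X1 Cau1 k t))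
      - \<gamma> * (Ufun M X1 Cau1 C1 K k (gn M X1 Cau1 k t) x c j - 1)"

definition W_moment_const :: "real \<Rightarrow> real" where
  "W_moment_const \<gamma> = 8 powr p * (1 + \<gamma>) powr p * (U1_moment_const + U2_moment_const + intdC_moment_const) + 2 powr p * (psi_const / \<theta> + \<gamma>) powr p"

lemma abs_W_powr_le:
  assumes t: "t \<ge> T" and g: "\<gamma> \<ge> 0"
  shows "\<bar>W t \<gamma> x c j\<bar> powr p \<le> 8 powr p * (1 + \<gamma>) powr p * (U1_env t x c j powr p + U2_env t x c powr p + intdC_env t (min x c) powr p)
     + 2 powr p * (psi_const / \<theta> + \<gamma>) powr p"
proof -
  have tp: "t > 0" using t T by simp
  define S where "S = U1_env t x c j + U2_env t x c + intdC_env t (min x c)"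
  have S0: "S \<ge> 0" unfolding S_def using U1_env_nn[OF tp] U2_env_nn intdC_env_nn by (simp add: add_nonneg_nonneg)
  have u1: "\<bar>Ufun M X1 Cau1 C1 K k (phin M X1 Cau1 k t) x c j\<bar> \<le> S"
    unfolding S_def by (rule abs_Ufun_le[OF t abs_phin_le[OF tp]])
  have u2: "\<bar>Ufun M X1 Cau1 C1 K k (gn M X1 Cau1 k t) x c j\<bar> \<le> S"
    unfolding S_def by (rule abs_Ufun_le[OF t abs_gn_le[OF tp]])
  have i1: "\<bar>intFk M X1 Cau1 k (phin M X1 Cau1 k t)\<bar> \<le> psi_const / \<theta>"
    by (rule abs_intFk_le[OF t abs_phin_le[OF tp]])
  have "\<bar>W t \<gamma> x c j\<bar> \<le> (1 + \<gamma>) * S + (psi_const / \<theta> + \<gamma>)"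
  proof -
    have "\<bar>\<gamma> * (Ufun M X1 Cau1 C1 K k (gn M X1 Cau1 k t) x c j - 1)\<bar> \<le> \<gamma> * (S + 1)"
      using u2 g by (simp add: abs_mult mult_left_mono)
    then show ?thesis unfolding W_def using u1 i1 by (simp add: algebra_simps)
  qed
  then have "\<bar>W t \<gamma> x c j\<bar> powr p \<le> ((1 + \<gamma>) * S + (psi_const / \<theta> + \<gamma>)) powr p"
    using p2 by (intro powr_mono2) auto
  also have "\<dots> \<le> 2 powr p * (((1 + \<gamma>) * S) powr p + (psi_const / \<theta> + \<gamma>) powr p)"
    using S0 g psi_const_pos th p2 by (intro powr_add_le) auto
  also have "((1 + \<gamma>) * S) powr p = (1 + \<gamma>) powr p * S powr p" using g S0 by (simp add: powr_mult)
  also have "S powr p \<le> 4 powr p * (U1_env t x c j powr p + U2_env t x c powr p + intdC_env t (min x c) powr p)"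
  proof -
    have "S powr p \<le> 2 powr p * (U1_env t x c j powr p + (U2_env t x c + intdC_env t (min x c)) powr p)"
      unfolding S_def add.assoc using U1_env_nn[OF tp] U2_env_nn intdC_env_nn p2 by (intro powr_add_le) (auto simp: add_nonneg_nonneg)
    also have "(U2_env t x c + intdC_env t (min x c)) powr p \<le> 2 powr p * (U2_env t x c powr p + intdC_env t (min x c) powr p)"
      using U2_env_nn intdC_env_nn p2 by (intro powr_add_le) auto
    finally have "S powr p \<le> 2 powr p * (U1_env t x c j powr p + 2 powr p * (U2_env t x c powr p + intdC_env t (min x c) powr p))"
      by (simp add: mult_left_mono)
    also have "\<dots> \<le> 4 powr p * (U1_env t x c j powr p + U2_env t x c powr p + intdC_env t (min x c) powr p)"
    proof -
      have e: "(4::real) powr p = 2 powr p * 2 powr p"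
        by (simp add: powr_mult[symmetric])
      have "2 powr p * U1_env t x c j powr p \<le> 2 powr p * 2 powr p * U1_env t x c j powr p"
        using p2 by (intro mult_right_mono) (auto simp: ge_one_powr_ge_zero)
      then show ?thesis unfolding e by (simp add: algebra_simps)
    qed
    finally show ?thesis .
  qed
  finally have "\<bar>W t \<gamma> x c j\<bar> powr p \<le> 2 powr p * ((1 + \<gamma>) powr p * (4 powr p * (U1_env t x c j powr p + U2_env t x c powr p + intdC_env t (min x c) powr p)) + (psi_const / \<theta> + \<gamma>) powr p)"
    using g by (simp add: mult_left_mono)
  also have "\<dots> = 8 powr p * (1 + \<gamma>) powr p * (U1_env t x c j powr p + U2_env t x c powr p + intdC_env t (min x c) powr p)
     + 2 powr p * (psi_const / \<theta> + \<gamma>) powr p"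
  proof -
    have e: "(8::real) powr p = 2 powr p * 4 powr p" by (simp add: powr_mult[symmetric])
    show ?thesis unfolding e by (simp add: algebra_simps)
  qed
  finally show ?thesis .
qed

lemma ab_powr_ge_1: "(a t * b t) powr (1 - p) \<ge> 1"
proof -
  have x1: "a t * b t \<le> 1" using a_le1[of t] b_le1[of t] a_pos[of t] b_pos[of t] by (simp add: mult_le_one)
  have x0: "a t * b t > 0" using a_pos[of t] b_pos[of t] by simp
  have "ln (a t * b t) \<le> 0" using x0 x1 by simp
  then have "(1 - p) * ln (a t * b t) \<ge> 0" using p2 by (intro mult_nonpos_nonpos) auto
  then show ?thesis unfolding powr_def using x0 a_pos[of t] b_pos[of t] by simp
qed

lemma U1_moment_const_nn: "U1_moment_const \<ge> 0"
proof -
  have "2 powr exp_U1 * 2 powr (-\<alpha>) < 1" using c1 unfolding exp_U1_def by (simp add: powr_add[symmetric] powr_less_one)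
  then show ?thesis unfolding U1_moment_const_def by simp
qed

lemma U2_moment_const_nn: "U2_moment_const \<ge> 0"
  unfolding U2_moment_const_def using level_const_pos[of p] tail_const_C_pos[of exp_U2] c2 p2 by (simp add: exp_U2_def)

lemma intdC_moment_const_nn: "intdC_moment_const \<ge> 0"
  unfolding intdC_moment_const_def
  using level_const_pos[of "p - 1"] level_const_pos[of 2] tail_const_Z_pos tail_const_C_pos[OF exp_dC_bounds(2)]
    intdC_const_pos psi_const_pos th p2
  by (simp add: add_nonneg_nonneg)

lemma moment_W_le:
  assumes t: "t \<ge> T" and g: "\<gamma> \<ge> 0" and c0: "c0 \<ge> 0"
    and Xim: "\<Xi> \<in> measurable M ((borel \<Otimes>\<^sub>M count_space UNIV) \<Otimes>\<^sub>M borel)"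
    and Xid: "distr M ((borel \<Otimes>\<^sub>M count_space UNIV) \<Otimes>\<^sub>M borel) \<Xi> = N"
  shows "(\<integral>\<^sup>+ w. ennreal (\<bar>c0 * W t \<gamma> (fst (fst (\<Xi> w))) (snd (\<Xi> w)) (snd (fst (\<Xi> w)))\<bar> powr p) \<partial>M)
    \<le> ennreal (c0 powr p * (W_moment_const \<gamma> * (a t * b t) powr (1 - p)))"
proof -
  have tp: "t > 0" using t T by simp
  note Drm[measurable] = intdC_env_meas[OF t]
  define c1 where "c1 = 8 powr p * (1 + \<gamma>) powr p"
  define c2 where "c2 = 2 powr p * (psi_const / \<theta> + \<gamma>) powr p"
  have cc: "c1 \<ge> 0" "c2 \<ge> 0" unfolding c1_def c2_def by simp_all
  define f1 where "f1 \<omega> = ennreal (U1_env t (fst (fst \<omega>)) (snd \<omega>) (snd (fst \<omega>)) powr p)" for \<omega> :: "(real \<times> nat) \<times> real"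
  define f2 where "f2 \<omega> = ennreal (U2_env t (fst (fst \<omega>)) (snd \<omega>) powr p)" for \<omega> :: "(real \<times> nat) \<times> real"
  define f3 where "f3 \<omega> = ennreal (intdC_env t (min (fst (fst \<omega>)) (snd \<omega>)) powr p)" for \<omega> :: "(real \<times> nat) \<times> real"
  have m1: "f1 \<in> borel_measurable N" unfolding f1_def U1_env_def by measurable
  have m2: "f2 \<in> borel_measurable N" unfolding f2_def U2_env_def by measurable
  have m3: "f3 \<in> borel_measurable N" unfolding f3_def by measurable
  define Bd where "Bd \<omega> = ennreal c1 * (f1 \<omega> + f2 \<omega> + f3 \<omega>) + ennreal c2" for \<omega>
  have Bdm: "Bd \<in> borel_measurable N" unfolding Bd_def using m1 m2 m3 by measurable
  have "(\<integral>\<^sup>+ w. ennreal (\<bar>c0 * W t \<gamma> (fst (fst (\<Xi> w))) (snd (\<Xi> w)) (snd (fst (\<Xi> w)))\<bar> powr p) \<partial>M)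
      \<le> (\<integral>\<^sup>+ w. ennreal (c0 powr p) * Bd (\<Xi> w) \<partial>M)"
  proof (rule nn_integral_mono)
    fix w
    define x where "x = fst (fst (\<Xi> w))"
    define c where "c = snd (\<Xi> w)"
    define j where "j = snd (fst (\<Xi> w))"
    have "\<bar>W t \<gamma> x c j\<bar> powr p \<le> c1 * (U1_env t x c j powr p + U2_env t x c powr p + intdC_env t (min x c) powr p) + c2"
      unfolding c1_def c2_def by (rule abs_W_powr_le[OF t g])
    then have "ennreal (\<bar>W t \<gamma> x c j\<bar> powr p) \<le> ennreal (c1 * (U1_env t x c j powr p + U2_env t x c powr p + intdC_env t (min x c) powr p) + c2)"
      by (rule ennreal_leI)
    also have "\<dots> = ennreal c1 * (ennreal (U1_env t x c j powr p) + ennreal (U2_env t x c powr p) + ennreal (intdC_env t (min x c) powr p)) + ennreal c2"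
      using cc by (simp add: ennreal_mult)
    finally have "ennreal (\<bar>W t \<gamma> (fst (fst (\<Xi> w))) (snd (\<Xi> w)) (snd (fst (\<Xi> w)))\<bar> powr p) \<le> Bd (\<Xi> w)"
      unfolding Bd_def f1_def f2_def f3_def x_def c_def j_def by simp
    then have "ennreal (c0 powr p) * ennreal (\<bar>W t \<gamma> (fst (fst (\<Xi> w))) (snd (\<Xi> w)) (snd (fst (\<Xi> w)))\<bar> powr p) \<le> ennreal (c0 powr p) * Bd (\<Xi> w)"
      by (rule mult_left_mono) simp
    moreover have "\<bar>c0 * W t \<gamma> (fst (fst (\<Xi> w))) (snd (\<Xi> w)) (snd (fst (\<Xi> w)))\<bar> powr p
       = c0 powr p * \<bar>W t \<gamma> (fst (fst (\<Xi> w))) (snd (\<Xi> w)) (snd (fst (\<Xi> w)))\<bar> powr p"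
      using c0 by (simp add: abs_mult powr_mult)
    ultimately show "ennreal (\<bar>c0 * W t \<gamma> (fst (fst (\<Xi> w))) (snd (\<Xi> w)) (snd (fst (\<Xi> w)))\<bar> powr p) \<le> ennreal (c0 powr p) * Bd (\<Xi> w)"
      by (simp add: ennreal_mult)
  qed
  also have "\<dots> = ennreal (c0 powr p) * (\<integral>\<^sup>+ w. Bd (\<Xi> w) \<partial>M)"
    by (rule nn_integral_cmult) (use Bdm Xim Xid in \<open>simp add: measurable_comp\<close>)
  also have "(\<integral>\<^sup>+ w. Bd (\<Xi> w) \<partial>M) = (\<integral>\<^sup>+ \<omega>. Bd \<omega> \<partial>N)"
    using nn_integral_distr[OF Xim, of Bd] Bdm Xid by simp
  also have "\<dots> = ennreal c1 * ((\<integral>\<^sup>+ \<omega>. f1 \<omega> \<partial>N) + (\<integral>\<^sup>+ \<omega>. f2 \<omega> \<partial>N) + (\<integral>\<^sup>+ \<omega>. f3 \<omega> \<partial>N)) + ennreal c2"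
  proof -

    have "(\<integral>\<^sup>+ \<omega>. Bd \<omega> \<partial>N) = (\<integral>\<^sup>+ \<omega>. ennreal c1 * (f1 \<omega> + f2 \<omega> + f3 \<omega>) \<partial>N) + (\<integral>\<^sup>+ \<omega>. ennreal c2 \<partial>N)"
      unfolding Bd_def by (intro nn_integral_add borel_measurable_times_ennreal borel_measurable_add m1 m2 m3 measurable_const) simp_all
    also have "(\<integral>\<^sup>+ \<omega>. ennreal c2 \<partial>N) = ennreal c2" by (simp add: prob_space.emeasure_space_1[OF N_prob])
    also have "(\<integral>\<^sup>+ \<omega>. ennreal c1 * (f1 \<omega> + f2 \<omega> + f3 \<omega>) \<partial>N) = ennreal c1 * (\<integral>\<^sup>+ \<omega>. (f1 \<omega> + f2 \<omega> + f3 \<omega>) \<partial>N)"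
      by (intro nn_integral_cmult borel_measurable_add m1 m2 m3)
    also have "(\<integral>\<^sup>+ \<omega>. (f1 \<omega> + f2 \<omega> + f3 \<omega>) \<partial>N) = (\<integral>\<^sup>+ \<omega>. (f1 \<omega> + f2 \<omega>) \<partial>N) + (\<integral>\<^sup>+ \<omega>. f3 \<omega> \<partial>N)"
      by (intro nn_integral_add borel_measurable_add m1 m2 m3)
    also have "(\<integral>\<^sup>+ \<omega>. (f1 \<omega> + f2 \<omega>) \<partial>N) = (\<integral>\<^sup>+ \<omega>. f1 \<omega> \<partial>N) + (\<integral>\<^sup>+ \<omega>. f2 \<omega> \<partial>N)"
      by (intro nn_integral_add m1 m2)
    finally show ?thesis .
  qed
  also have "\<dots> \<le> ennreal c1 * (ennreal (U1_moment_const * (a t * b t) powr (1 - p)) + ennreal (U2_moment_const * (a t * b t) powr (1 - p))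
        + ennreal (intdC_moment_const * (a t * b t) powr (1 - p))) + ennreal c2"
    unfolding f1_def f2_def f3_def using moment_U1_env[OF t] moment_U2_env[OF t] moment_intdC_env[OF t]
    by (intro add_mono mult_left_mono order_refl) auto
  also have "\<dots> \<le> ennreal (W_moment_const \<gamma> * (a t * b t) powr (1 - p))"
  proof -
    define AB where "AB = (a t * b t) powr (1 - p)"
    have AB1: "AB \<ge> 1" unfolding AB_def by (rule ab_powr_ge_1)
    note k1 = U1_moment_const_nn and k2 = U2_moment_const_nn and k3 = intdC_moment_const_nn
    have "ennreal c1 * (ennreal (U1_moment_const * AB) + ennreal (U2_moment_const * AB) + ennreal (intdC_moment_const * AB)) + ennreal c2
        = ennreal (c1 * (U1_moment_const + U2_moment_const + intdC_moment_const) * AB + c2)"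
      using cc k1 k2 k3 AB1 by (simp add: ennreal_mult[symmetric] ennreal_plus[symmetric] algebra_simps del: ennreal_plus)
    also have "\<dots> \<le> ennreal (W_moment_const \<gamma> * AB)"
    proof (rule ennreal_leI)
      have "c2 \<le> c2 * AB" using cc AB1 by (simp add: mult_le_cancel_left1)
      then show "c1 * (U1_moment_const + U2_moment_const + intdC_moment_const) * AB + c2 \<le> W_moment_const \<gamma> * AB"
        unfolding W_moment_const_def c1_def[symmetric] c2_def[symmetric] by (simp add: algebra_simps)
    qed
    finally show ?thesis unfolding AB_def .
  qed
  finally have "(\<integral>\<^sup>+ w. ennreal (\<bar>c0 * W t \<gamma> (fst (fst (\<Xi> w))) (snd (\<Xi> w)) (snd (fst (\<Xi> w)))\<bar> powr p) \<partial>M)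
     \<le> ennreal (c0 powr p) * ennreal (W_moment_const \<gamma> * (a t * b t) powr (1 - p))" by (simp add: mult_left_mono)
  then show ?thesis by (simp add: ennreal_mult')
qed

lemma moment_sum_tendsto_zero:
  assumes t: "filterlim t at_top sequentially"
    and v: "filterlim (\<lambda>n. real n * a (t n) * b (t n)) at_top sequentially"
    and g: "\<gamma> \<ge> 0"
    and \<Xi>m: "\<And>i. i \<ge> 1 \<Longrightarrow> \<Xi> i \<in> measurable M ((borel \<Otimes>\<^sub>M count_space UNIV) \<Otimes>\<^sub>M borel)"
    and \<Xi>d: "\<And>i. i \<ge> 1 \<Longrightarrow> distr M ((borel \<Otimes>\<^sub>M count_space UNIV) \<Otimes>\<^sub>M borel) (\<Xi> i) = N"
  shows "((\<lambda>n. \<Sum>i\<in>{1..n}. \<integral>\<^sup>+ w. ennreal (\<bar>sqrt (real n * a (t n) * b (t n)) / real n *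
            W (t n) \<gamma> (fst (fst (\<Xi> i w))) (snd (\<Xi> i w)) (snd (fst (\<Xi> i w)))\<bar> powr p) \<partial>M) \<longlongrightarrow> 0) sequentially"
    (is "(?F \<longlongrightarrow> 0) _")
proof -
  define v where "v n = real n * a (t n) * b (t n)" for n
  obtain N0 where N0: "\<And>n. n \<ge> N0 \<Longrightarrow> t n \<ge> T"
    using t unfolding filterlim_at_top eventually_sequentially by blast
  have bound: "?F n \<le> ennreal (W_moment_const \<gamma> * v n powr (1 - p / 2))" if n: "n \<ge> max N0 1" for n
  proof -
    define c0 where "c0 = sqrt (v n) / real n"
    have ab: "a (t n) * b (t n) > 0" using a_pos b_pos by simp
    have c0: "c0 \<ge> 0" unfolding c0_def v_def using ab by (simp add: mult.assoc)
    have "?F n \<le> (\<Sum>i\<in>{1..n}. ennreal (c0 powr p * (W_moment_const \<gamma> * (a (t n) * b (t n)) powr (1 - p))))"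
      unfolding v_def[symmetric] c0_def[symmetric] using n by (intro sum_mono moment_W_le[OF N0 g c0 \<Xi>m \<Xi>d]) auto
    also have "\<dots> = ennreal (W_moment_const \<gamma> * (real n * (c0 powr p * (a (t n) * b (t n)) powr (1 - p))))"
      by (simp add: ennreal_mult' ennreal_of_nat_eq_real_of_nat mult_ac)
    also have "real n * (c0 powr p * (a (t n) * b (t n)) powr (1 - p)) = v n powr (1 - p / 2)"
      using powr_rate_identity[of "real n" "a (t n) * b (t n)" p] n ab unfolding c0_def v_def by (simp add: mult.assoc)
    finally show ?thesis .
  qed
  have "((\<lambda>n. W_moment_const \<gamma> * v n powr (1 - p / 2)) \<longlongrightarrow> W_moment_const \<gamma> * 0) sequentially"
    using p2 by (intro tendsto_mult tendsto_const tendsto_neg_powr) (auto simp: v_def v)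
  then have lim: "((\<lambda>n. ennreal (W_moment_const \<gamma> * v n powr (1 - p / 2))) \<longlongrightarrow> 0) sequentially"
    using tendsto_ennrealI by fastforce
  show ?thesis
    by (rule tendsto_sandwich[OF _ _ tendsto_const lim]) (use bound in \<open>auto simp: eventually_sequentially intro: exI[of _ "max N0 1"]\<close>)
qed

end

lemma joint_distr_eq_pair_measure:
  fixes M :: "'a measure" and X :: "nat \<Rightarrow> 'a \<Rightarrow> real" and Cau :: "nat \<Rightarrow> 'a \<Rightarrow> nat"
    and C :: "nat \<Rightarrow> 'a \<Rightarrow> real" and i :: nat
  assumes P: "prob_space M" and i: "i \<ge> 1"
    and iv1: "prob_space.indep_vars M (\<lambda>_. borel \<Otimes>\<^sub>M count_space UNIV) (\<lambda>i w. (X i w, Cau i w)) {1..}"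
    and d1: "\<forall>i\<ge>1. distr M (borel \<Otimes>\<^sub>M count_space UNIV) (\<lambda>w. (X i w, Cau i w))
                = distr M (borel \<Otimes>\<^sub>M count_space UNIV) (\<lambda>w. (X 1 w, Cau 1 w))"
    and iv2: "prob_space.indep_vars M (\<lambda>_. borel) C {1..}"
    and d2: "\<forall>i\<ge>1. distr M borel (C i) = distr M borel (C 1)"
    and ind: "prob_space.indep_set M
           (sigma_sets (space M) (\<Union>i\<in>{1..}. {(\<lambda>w. (X i w, Cau i w)) -` A \<inter> space M | A.
               A \<in> sets (borel \<Otimes>\<^sub>M count_space UNIV)}))
           (sigma_sets (space M) (\<Union>i\<in>{1..}. {C i -` A \<inter> space M | A. A \<in> sets borel}))"
  shows "distr M ((borel \<Otimes>\<^sub>M count_space UNIV) \<Otimes>\<^sub>M borel) (\<lambda>w. ((X i w, Cau i w), C i w))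
     = distr M (borel \<Otimes>\<^sub>M count_space UNIV) (\<lambda>w. (X 1 w, Cau 1 w)) \<Otimes>\<^sub>M distr M borel (C 1)"
proof -
  interpret prob_space M by (rule P)
  have rv1: "random_variable (borel \<Otimes>\<^sub>M count_space UNIV) (\<lambda>w. (X i w, Cau i w))"
    using iv1 i unfolding indep_vars_def by auto
  have rv2: "random_variable borel (C i)"
    using iv2 i unfolding indep_vars_def by auto
  have s1: "sigma_sets (space M) {(\<lambda>w. (X i w, Cau i w)) -` A \<inter> space M | A. A \<in> sets (borel \<Otimes>\<^sub>M count_space UNIV)}
      \<subseteq> sigma_sets (space M) (\<Union>i\<in>{1..}. {(\<lambda>w. (X i w, Cau i w)) -` A \<inter> space M | A.
               A \<in> sets (borel \<Otimes>\<^sub>M count_space UNIV)})"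
      by (rule sigma_sets_mono) (use i in blast)
  have s2: "sigma_sets (space M) {C i -` A \<inter> space M | A. A \<in> sets borel}
      \<subseteq> sigma_sets (space M) (\<Union>i\<in>{1..}. {C i -` A \<inter> space M | A. A \<in> sets borel})"
      by (rule sigma_sets_mono) (use i in blast)
  let ?S = "distr M (borel \<Otimes>\<^sub>M count_space UNIV) (\<lambda>w. (X i w, Cau i w))"
  let ?T = "distr M borel (C i)"
  let ?J = "distr M ((borel \<Otimes>\<^sub>M count_space UNIV) \<Otimes>\<^sub>M borel) (\<lambda>w. ((X i w, Cau i w), C i w))"
  have XY: "random_variable ((borel \<Otimes>\<^sub>M count_space UNIV) \<Otimes>\<^sub>M borel) (\<lambda>w. ((X i w, Cau i w), C i w))"
    using rv1 rv2 by (rule measurable_Pair)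
  interpret XX: prob_space ?S by (rule prob_space_distr) (rule rv1)
  interpret YY: prob_space ?T by (rule prob_space_distr) (rule rv2)
  interpret XY: pair_prob_space ?S ?T ..
  have "?S \<Otimes>\<^sub>M ?T = ?J"
  proof (rule pair_measure_eqI)
    show "sigma_finite_measure ?S" ..
    show "sigma_finite_measure ?T" ..
    fix A B assume A: "A \<in> sets ?S" and B: "B \<in> sets ?T"
    have "emeasure ?J (A \<times> B) = emeasure M ((\<lambda>w. ((X i w, Cau i w), C i w)) -` (A \<times> B) \<inter> space M)"
      using A B by (intro emeasure_distr[OF XY]) auto
    also have "\<dots> = emeasure M ((\<lambda>w. (X i w, Cau i w)) -` A \<inter> space M \<inter> (C i -` B \<inter> space M))"
      by (intro arg_cong[where f="emeasure M"]) auto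
    also have "\<dots> = emeasure M ((\<lambda>w. (X i w, Cau i w)) -` A \<inter> space M) * emeasure M (C i -` B \<inter> space M)"
    proof -
      have a: "(\<lambda>w. (X i w, Cau i w)) -` A \<inter> space M \<in> sigma_sets (space M) {(\<lambda>w. (X i w, Cau i w)) -` A \<inter> space M | A. A \<in> sets (borel \<Otimes>\<^sub>M count_space UNIV)}"
        using A by (intro sigma_sets.Basic) auto
      have b: "C i -` B \<inter> space M \<in> sigma_sets (space M) {C i -` A \<inter> space M | A. A \<in> sets borel}"
        using B by (intro sigma_sets.Basic) auto
      have "prob ((\<lambda>w. (X i w, Cau i w)) -` A \<inter> space M \<inter> (C i -` B \<inter> space M))
          = prob ((\<lambda>w. (X i w, Cau i w)) -` A \<inter> space M) * prob (C i -` B \<inter> space M)"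
      proof -
        have "\<forall>a\<in>sigma_sets (space M) (\<Union>i\<in>{1..}. {(\<lambda>w. (X i w, Cau i w)) -` A \<inter> space M | A.
               A \<in> sets (borel \<Otimes>\<^sub>M count_space UNIV)}).
             \<forall>b\<in>sigma_sets (space M) (\<Union>i\<in>{1..}. {C i -` A \<inter> space M | A. A \<in> sets borel}).
             prob (a \<inter> b) = prob a * prob b"
          using ind[unfolded indep_sets2_eq] by (elim conjE)
        moreover have "(\<lambda>w. (X i w, Cau i w)) -` A \<inter> space M \<in> sigma_sets (space M) (\<Union>i\<in>{1..}. {(\<lambda>w. (X i w, Cau i w)) -` A \<inter> space M | A.
               A \<in> sets (borel \<Otimes>\<^sub>M count_space UNIV)})" using s1 a by (rule subsetD)
        moreover have "C i -` B \<inter> space M \<in> sigma_sets (space M) (\<Union>i\<in>{1..}. {C i -` A \<inter> space M | A. A \<in> sets borel})"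
          using s2 b by (rule subsetD)
        ultimately show ?thesis by blast
      qed
      then show ?thesis by (simp add: emeasure_eq_measure measure_nonneg ennreal_mult)
    qed
    also have "\<dots> = emeasure ?S A * emeasure ?T B"
      using rv1 rv2 A B by (simp add: emeasure_distr)
    finally show "emeasure ?S A * emeasure ?T B = emeasure ?J (A \<times> B)" by simp
  qed simp
  moreover have "?S = distr M (borel \<Otimes>\<^sub>M count_space UNIV) (\<lambda>w. (X 1 w, Cau 1 w))"
    using d1 i by blast
  moreover have "?T = distr M borel (C 1)" using d2 i by blast
  ultimately show ?thesis by simp
qed

lemma regvar_imp_doubling_tails:
  assumes P: "prob_space M"
    and Xm: "X1 \<in> borel_measurable M" and Cm: "C1 \<in> borel_measurable M"
    and Caum: "Cau1 \<in> measurable M (count_space UNIV)"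
    and rng: "\<forall>w\<in>space M. X1 w \<ge> 0 \<and> C1 w \<ge> 0 \<and> Cau1 w \<in> {1..K}"
    and K: "K \<ge> 1" and kK: "k \<in> {1..K}"
    and contX: "continuous_on UNIV (distF M X1)" and contC: "continuous_on UNIV (distF M C1)"
    and rvF: "\<forall>j\<in>{1..K}. \<gamma> j > 0 \<and> regvar (subFbar M X1 Cau1 j) (- 1 / \<gamma> j)"
    and gC: "\<gamma>C > 0" and rvG: "regvar (Gbar M C1) (- 1 / \<gamma>C)"
    and gkC: "\<gamma> k < \<gamma>C"
  obtains T \<theta> \<alpha> \<beta> \<beta>' \<eta> where "doubling_tails M X1 Cau1 C1 K k T \<theta> (2 + \<theta>) \<alpha> \<beta> \<beta>' \<eta>"
proof -
  interpret prob_space M by (rule P)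
  define A where "A = 1 / \<gamma> k"
  define B where "B = 1 / \<gamma>C"
  define \<eta> where "\<eta> = Min ((\<lambda>j. 1 / \<gamma> j) ` {1..K})"
  have gk: "\<gamma> k > 0" using rvF kK by blast
  have B: "0 < B" using gC by (simp add: B_def)
  have AB: "B < A" using gk gC gkC unfolding A_def B_def by (simp add: frac_less2)
  have \<eta>_le: "\<eta> \<le> 1 / \<gamma> j" if "j \<in> {1..K}" for j
    unfolding \<eta>_def using that by (intro Min_le) auto
  have \<eta>: "0 < \<eta>"
    unfolding \<eta>_def using K rvF by (subst Min_gr_iff) auto
  obtain \<theta> where th: "0 < \<theta>" "\<theta> \<le> 1" and pos: "0 < A - \<theta>" "0 < B - \<theta>" "0 < \<eta> - \<theta>"
    and c1: "\<theta> * (2 + \<theta>) + (B + \<theta>) * (2 + \<theta> - 1) < A - \<theta>"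
    and c2: "max (\<theta> * (2 + \<theta>) - (A - \<theta>) + (B + \<theta>) * (2 + \<theta>)) 0 < B - \<theta>"
    and c3: "(\<theta> + (B + \<theta>)) * (2 + \<theta> - 1) < (B - \<theta>) + (\<eta> - \<theta>)"
    and c4: "max (\<theta> - (A - \<theta>) + (\<theta> + (B + \<theta>)) * (2 + \<theta> - 1) + (B + \<theta>)) 0 < B - \<theta>"
    and c5: "\<theta> < A - \<theta>"
    using small_exponent_exists[OF B AB \<eta>] by blast
  have a_nn: "\<And>s. subFbar M X1 Cau1 k s \<ge> 0" by (simp add: subFbar_def)
  have b_nn: "\<And>s. Gbar M C1 s \<ge> 0" by (simp add: Gbar_def distF_def)
  have ev_a: "eventually (\<lambda>s. subFbar M X1 Cau1 k s > 0 \<and>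
      subFbar M X1 Cau1 k (2 * s) \<le> 2 powr (-(A - \<theta>)) * subFbar M X1 Cau1 k s) at_top"
    using rvF kK th by (intro regvar_eventually_doubling_le[OF _ a_nn]) (auto simp: A_def)
  have ev_b1: "eventually (\<lambda>s. Gbar M C1 s > 0 \<and> 2 powr (-(B + \<theta>)) * Gbar M C1 s \<le> Gbar M C1 (2 * s)) at_top"
    using th by (intro regvar_eventually_doubling_ge[OF rvG b_nn]) (simp add: B_def)
  have ev_b2: "eventually (\<lambda>s. Gbar M C1 s > 0 \<and> Gbar M C1 (2 * s) \<le> 2 powr (-(B - \<theta>)) * Gbar M C1 s) at_top"
    using th by (intro regvar_eventually_doubling_le[OF rvG b_nn]) (simp add: B_def)
  have ev_F: "eventually (\<lambda>s. Fbar M X1 Cau1 K (2 * s) \<le> 2 powr (-(\<eta> - \<theta>)) * Fbar M X1 Cau1 K s) at_top"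
  proof (rule Fbar_eventually_doubling, intro ballI conjI)
    fix j assume j: "j \<in> {1..K}"
    show "regvar (subFbar M X1 Cau1 j) (- 1 / \<gamma> j)" using rvF j by blast
    show "- 1 / \<gamma> j < - (\<eta> - \<theta>)" using \<eta>_le[OF j] th by simp
  qed
  have "\<forall>\<^sub>F T in at_top. doubling_tails M X1 Cau1 C1 K k T \<theta> (2 + \<theta>) (A - \<theta>) (B + \<theta>) (B - \<theta>) (\<eta> - \<theta>)"
    using eventually_gt_at_top[of 0] eventually_all_ge_at_top[OF ev_a] eventually_all_ge_at_top[OF ev_b1]
      eventually_all_ge_at_top[OF ev_b2] eventually_all_ge_at_top[OF ev_F]
  proof eventually_elim
    case (elim T)
    then show ?case
      using P Xm Cm Caum rng kK contX contC th pos B c1 c2 c3 c4 c5 by unfold_locales auto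
  qed
  then show ?thesis unfolding eventually_at_top_linorder by (blast intro: that)
qed

theorem lemma4:
  fixes M :: "'a measure" and X :: "nat \<Rightarrow> 'a \<Rightarrow> real" and Cau :: "nat \<Rightarrow> 'a \<Rightarrow> nat"
    and C :: "nat \<Rightarrow> 'a \<Rightarrow> real" and K k :: nat and \<gamma> :: "nat \<Rightarrow> real" and \<gamma>C :: real
    and t :: "nat \<Rightarrow> real"
  assumes "prob_space M"
    and "K \<ge> 1" and "k \<in> {1..K}"
    and "prob_space.indep_vars M (\<lambda>_. borel \<Otimes>\<^sub>M count_space UNIV) (\<lambda>i w. (X i w, Cau i w)) {1..}"
    and "\<forall>i\<ge>1. distr M (borel \<Otimes>\<^sub>M count_space UNIV) (\<lambda>w. (X i w, Cau i w))
                = distr M (borel \<Otimes>\<^sub>M count_space UNIV) (\<lambda>w. (X 1 w, Cau 1 w))"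
    and "prob_space.indep_vars M (\<lambda>_. borel) C {1..}"
    and "\<forall>i\<ge>1. distr M borel (C i) = distr M borel (C 1)"
    and "prob_space.indep_set M
           (sigma_sets (space M) (\<Union>i\<in>{1..}. {(\<lambda>w. (X i w, Cau i w)) -` A \<inter> space M | A.
               A \<in> sets (borel \<Otimes>\<^sub>M count_space UNIV)}))
           (sigma_sets (space M) (\<Union>i\<in>{1..}. {C i -` A \<inter> space M | A. A \<in> sets borel}))"
    and "\<forall>i\<ge>1. \<forall>w\<in>space M. X i w \<ge> 0 \<and> C i w \<ge> 0 \<and> Cau i w \<in> {1..K}"
    and "continuous_on UNIV (distF M (X 1))"
    and "continuous_on UNIV (distF M (C 1))"
    \<comment> \<open>(A1)\<close>
    and "\<forall>j\<in>{1..K}. \<gamma> j > 0 \<and> regvar (subFbar M (X 1) (Cau 1) j) (- 1 / \<gamma> j)"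
    and "\<gamma>C > 0" and "regvar (Gbar M (C 1)) (- 1 / \<gamma>C)"
    \<comment> \<open>t_n \<rightarrow> \<infinity>, v_n \<rightarrow> \<infinity>, \<gamma>_k < \<gamma>_C\<close>
    and "filterlim t at_top sequentially"
    and "filterlim (\<lambda>n. real n * subFbar M (X 1) (Cau 1) k (t n) * Gbar M (C 1) (t n)) at_top sequentially"
    and "\<gamma> k < \<gamma>C"
  shows "\<exists>\<delta>>0. ((\<lambda>n. \<Sum>i\<in>{1..n}. \<integral>\<^sup>+ w. ennreal (\<bar>
            sqrt (real n * subFbar M (X 1) (Cau 1) k (t n) * Gbar M (C 1) (t n)) / real n *
            ((Ufun M (X 1) (Cau 1) (C 1) K k (phin M (X 1) (Cau 1) k (t n)) (X i w) (C i w) (Cau i w)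
                - intFk M (X 1) (Cau 1) k (phin M (X 1) (Cau 1) k (t n)))
             - \<gamma> k * (Ufun M (X 1) (Cau 1) (C 1) K k (gn M (X 1) (Cau 1) k (t n)) (X i w) (C i w) (Cau i w) - 1))
           \<bar> powr (2 + \<delta>)) \<partial>M) \<longlongrightarrow> 0) sequentially"
proof -
  interpret prob_space M by (rule assms(1))
  have XCau_m: "(\<lambda>w. (X i w, Cau i w)) \<in> measurable M (borel \<Otimes>\<^sub>M count_space UNIV)" if "i \<ge> 1" for i
    using assms(4) that unfolding indep_vars_def by auto
  have C_m: "C i \<in> borel_measurable M" if "i \<ge> 1" for i
    using assms(6) that unfolding indep_vars_def by auto
  have \<Xi>m: "(\<lambda>w. ((X i w, Cau i w), C i w)) \<in> measurable M ((borel \<Otimes>\<^sub>M count_space UNIV) \<Otimes>\<^sub>M borel)"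
    if "i \<ge> 1" for i
    using XCau_m[OF that] C_m[OF that] by (rule measurable_Pair)
  have \<Xi>d: "distr M ((borel \<Otimes>\<^sub>M count_space UNIV) \<Otimes>\<^sub>M borel) (\<lambda>w. ((X i w, Cau i w), C i w))
      = distr M (borel \<Otimes>\<^sub>M count_space UNIV) (\<lambda>w. (X 1 w, Cau 1 w)) \<Otimes>\<^sub>M distr M borel (C 1)"
    if "i \<ge> 1" for i
    using assms(1) that assms(4-8) by (rule joint_distr_eq_pair_measure)
  have X1m: "X 1 \<in> borel_measurable M" and Cau1m: "Cau 1 \<in> measurable M (count_space UNIV)"
    using measurable_compose[OF XCau_m[OF order_refl] measurable_fst]
      measurable_compose[OF XCau_m[OF order_refl] measurable_snd] by simp_all
  have rng1: "\<forall>w\<in>space M. X 1 w \<ge> 0 \<and> C 1 w \<ge> 0 \<and> Cau 1 w \<in> {1..K}" using assms(9) by simp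
  obtain T \<theta> \<alpha> \<beta> \<beta>' \<eta> where "doubling_tails M (X 1) (Cau 1) (C 1) K k T \<theta> (2 + \<theta>) \<alpha> \<beta> \<beta>' \<eta>"
    by (rule regvar_imp_doubling_tails[OF assms(1) X1m C_m[OF order_refl] Cau1m rng1 assms(2,3,10-14,17)])
  then interpret L: doubling_tails M "X 1" "Cau 1" "C 1" K k T \<theta> "2 + \<theta>" \<alpha> \<beta> \<beta>' \<eta> .
  have "\<gamma> k \<ge> 0" using assms(3,12) by fastforce
  from L.moment_sum_tendsto_zero[OF assms(15,16) this \<Xi>m \<Xi>d]
  show ?thesis unfolding L.W_def using L.th by (intro exI[of _ \<theta>]) simp
qed

end
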